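(* Let $F$ be a finite nontrivial group and $S$ a finite symmetric generating set of $\mathbb{Z}\wr F$. Let $\Lambda$ be a uniformly random (i.i.d. uniform) configuration in $F^{\mathbb{Z}}$ and let $\Lambda_n$ be its restriction to $\{1,\dots,n\}$ (a uniform element of $\oplus_{z\in\{1,\dots,n\}}F$). For $x,y\in\mathbb{Z}$ let $\mathrm{TSP}_S(\Lambda_n;x,y)$ be the length of the shortest $S$-path writing $\Lambda_n$ whose projection to $\mathbb{Z}$ starts at $x$ and ends at $y$. Then there are constants $c_1,c_2>0$ such that almost surely \[ \lim_{n\to\infty}\frac1n\mathrm{TSP}_S(\Lambda_n;1,1)=c_1,\qquad \lim_{n\to\infty}\frac1n\mathrm{TSP}_S(\Lambda_n;1,n)=c_2. \]
   Context: Elements of $\mathbb{Z}\wr F$ are pairs $(x,f)$ with $x\in\mathbb{Z}$, $f:\mathbb{Z}\to F$ finitely supported. An $S$-path is a sequence $(x_0,\dots,x_k)$ with $x_{i-1}^{-1}x_i\in S$, of length $k$. An $S$-path writing a configuration $\phi$ with projected start $x$ and end $y$ is one with $x_0=(x,\mathbf{0})$ and $x_k=(y,\phi)$, where $\mathbf 0$ is the trivial configuration. *)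

theory Defs
  imports "HOL-Probability.Probability"
begin

text \<open>The finite group F is a type of class
  group_add (not necessarily commutative); its operation is written additively.\<close>

definition wr_carrier :: "(int \<times> (int \<Rightarrow> 'f::group_add)) set" where
  "wr_carrier = {(x, f). finite {z. f z \<noteq> 0}}"

definition wr_one :: "int \<times> (int \<Rightarrow> 'f::group_add)" where
  "wr_one = (0, \<lambda>_. 0)"

definition wr_mult :: "int \<times> (int \<Rightarrow> 'f::group_add) \<Rightarrow> int \<times> (int \<Rightarrow> 'f) \<Rightarrow> int \<times> (int \<Rightarrow> 'f)" where
  "wr_mult a b = (fst a + fst b, \<lambda>z. snd a z + snd b (z - fst a))"

definition wr_inv :: "int \<times> (int \<Rightarrow> 'f::group_add) \<Rightarrow> int \<times> (int \<Rightarrow> 'f)" where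
  "wr_inv a = (- fst a, \<lambda>z. - snd a (z + fst a))"

inductive_set wr_words :: "(int \<times> (int \<Rightarrow> 'f::group_add)) set \<Rightarrow> (int \<times> (int \<Rightarrow> 'f)) set"
  for S where
  one: "wr_one \<in> wr_words S"
| step: "g \<in> wr_words S \<Longrightarrow> s \<in> S \<Longrightarrow> wr_mult g s \<in> wr_words S"

definition wr_symmetric_generating_set :: "(int \<times> (int \<Rightarrow> 'f::group_add)) set \<Rightarrow> bool" where
  "wr_symmetric_generating_set S \<longleftrightarrow>
     finite S \<and> S \<subseteq> wr_carrier \<and> (\<forall>s\<in>S. wr_inv s \<in> S) \<and> wr_words S = wr_carrier"

definition writing_path ::
  "(int \<times> (int \<Rightarrow> 'f::group_add)) set \<Rightarrow> (int \<Rightarrow> 'f) \<Rightarrow> int \<Rightarrow> int \<Rightarrow> nat \<Rightarrow> (nat \<Rightarrow> int \<times> (int \<Rightarrow> 'f)) \<Rightarrow> bool" where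
  "writing_path S phi x y k p \<longleftrightarrow>
     p 0 = (x, \<lambda>_. 0) \<and> p k = (y, phi) \<and> (\<forall>i<k. wr_mult (wr_inv (p i)) (p (Suc i)) \<in> S)"

definition TSP :: "(int \<times> (int \<Rightarrow> 'f::group_add)) set \<Rightarrow> (int \<Rightarrow> 'f) \<Rightarrow> int \<Rightarrow> int \<Rightarrow> nat" where
  "TSP S phi x y = (LEAST k. \<exists>p. writing_path S phi x y k p)"

definition restr_conf :: "(int \<Rightarrow> 'f::group_add) \<Rightarrow> nat \<Rightarrow> int \<Rightarrow> 'f" where
  "restr_conf \<omega> n = (\<lambda>z. if z \<in> {1..int n} then \<omega> z else 0)"

definition unif_conf_measure :: "(int \<Rightarrow> 'f::{finite,group_add}) measure" where
  "unif_conf_measure = PiM UNIV (\<lambda>_::int. measure_pmf (pmf_of_set (UNIV :: 'f set)))"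

end

theory Submission
  imports Defs "HOL-Library.Discrete_Functions" "HOL-Real_Asymp.Real_Asymp"
begin

text \<open>The length of a shortest writing path is the word length of the element
  \<open>(y - x, \<phi> shifted by x)\<close>. Every generator moves the cursor and touches lamps only within
  a bounded distance \<open>R\<close>, so a shortest word passes near every lit lamp and near every point
  between its end points, and a detour from there changes one lamp at bounded cost. Hence the
  open tour length, and the length of a closed tour that is forced to reach \<open>n + 1\<close> by a lit
  marker lamp, are subadditive up to a constant under concatenation of windows, change by a
  bounded amount when one lamp or \<open>n\<close> changes, and grow at least linearly in \<open>n\<close>.
  For such functionals Fekete's lemma gives the limit of the means, the Efron--Stein inequality
  bounds the variance by \<open>O(n)\<close>, Chebyshev's inequality and Borel--Cantelli give almost sure
  convergence along the squares, and the bounded increments fill the gaps. The plain closed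
  tour differs from the marked one by \<open>O(n - M\<^sub>n)\<close>, where \<open>M\<^sub>n\<close> is the last lit lamp
  in \<open>{1..n}\<close>, and \<open>n - M\<^sub>n = O(log n)\<close> almost surely.\<close>

lemma wr_mult_Pair: "wr_mult (x, f) (y, g) = (x + y, \<lambda>z. f z + g (z - x))"
  by (simp add: wr_mult_def)

lemma wr_inv_Pair: "wr_inv (x, f) = (- x, \<lambda>z. - f (z + x))"
  by (simp add: wr_inv_def)

lemma wr_mult_assoc: "wr_mult (wr_mult a b) c = wr_mult a (wr_mult b c)"
  by (cases a; cases b; cases c) (simp add: wr_mult_Pair algebra_simps)

lemma wr_mult_one_left [simp]: "wr_mult wr_one a = a"
  by (cases a) (simp add: wr_mult_Pair wr_one_def)

lemma wr_mult_one_right [simp]: "wr_mult a wr_one = a"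
  by (cases a) (simp add: wr_mult_Pair wr_one_def)

lemma wr_mult_inv_left [simp]: "wr_mult (wr_inv a) a = wr_one"
  by (cases a) (simp add: wr_mult_Pair wr_inv_Pair wr_one_def fun_eq_iff)

lemma wr_mult_inv_right [simp]: "wr_mult a (wr_inv a) = wr_one"
  by (cases a) (simp add: wr_mult_Pair wr_inv_Pair wr_one_def fun_eq_iff)

lemma wr_inv_mult_cancel [simp]: "wr_mult (wr_inv a) (wr_mult a b) = b"
  by (metis wr_mult_assoc wr_mult_inv_left wr_mult_one_left)

lemma wr_mult_inv_cancel [simp]: "wr_mult a (wr_mult (wr_inv a) b) = b"
  by (metis wr_mult_assoc wr_mult_inv_right wr_mult_one_left)

lemma fst_wr_one [simp]: "fst wr_one = 0" and snd_wr_one [simp]: "snd wr_one z = 0"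
  by (simp_all add: wr_one_def)

lemma mem_wr_carrier [simp]: "(x, f) \<in> wr_carrier \<longleftrightarrow> finite {z. f z \<noteq> 0}"
  by (simp add: wr_carrier_def)

lemma wr_mult_closed:
  assumes "a \<in> wr_carrier" "b \<in> wr_carrier"
  shows "wr_mult a b \<in> wr_carrier"
proof -
  obtain x f y g where ab: "a = (x, f)" "b = (y, g)" by fastforce
  have "{z. f z + g (z - x) \<noteq> 0} \<subseteq> {z. f z \<noteq> 0} \<union> (\<lambda>z. z + x) ` {z. g z \<noteq> 0}"
    by (auto simp: image_iff) (metis add.commute add.left_neutral diff_add_cancel)
  then show ?thesis
    using assms ab by (auto simp: wr_mult_Pair intro: finite_subset)
qed

lemma wr_one_closed [simp]: "wr_one \<in> wr_carrier"
  by (simp add: wr_one_def)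

lemma finite_support_shift:
  fixes f :: "int \<Rightarrow> 'a::zero"
  assumes "finite {z. f z \<noteq> 0}"
  shows "finite {z. f (z + c) \<noteq> 0}"
proof -
  have "{z. f (z + c) \<noteq> 0} \<subseteq> (\<lambda>z. z - c) ` {z. f z \<noteq> 0}"
    by (auto simp: image_iff) (metis add_diff_cancel)
  then show ?thesis using assms by (metis finite_imageI finite_subset)
qed

lemma finite_support_upd: "finite {z. f z \<noteq> 0} \<Longrightarrow> finite {z. (f(w := e)) z \<noteq> 0}"
  by (rule finite_subset[of _ "insert w {z. f z \<noteq> 0}"]) auto

lemma wr_carrier_set_lamp: "g \<in> wr_carrier \<Longrightarrow> (fst g, (snd g)(w := e)) \<in> wr_carrier"
  by (cases g) (simp add: finite_support_upd del: fun_upd_apply)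

lemma finite_support_restr_conf [simp]: "finite {z. restr_conf \<phi> n z \<noteq> 0}"
  by (rule finite_subset[of _ "{1..int n}"]) (auto simp: restr_conf_def split: if_splits)

definition wr_prod :: "(int \<times> (int \<Rightarrow> 'f::group_add)) list \<Rightarrow> int \<times> (int \<Rightarrow> 'f)" where
  "wr_prod ws = foldr wr_mult ws wr_one"

lemma wr_prod_Nil [simp]: "wr_prod [] = wr_one"
  by (simp add: wr_prod_def)

lemma wr_prod_Cons [simp]: "wr_prod (a # ws) = wr_mult a (wr_prod ws)"
  by (simp add: wr_prod_def)

lemma wr_prod_append: "wr_prod (xs @ ys) = wr_mult (wr_prod xs) (wr_prod ys)"
  by (induction xs) (simp_all add: wr_mult_assoc)

lemma wr_prod_snoc: "wr_prod (xs @ [a]) = wr_mult (wr_prod xs) a"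
  by (simp add: wr_prod_append)

lemma fst_wr_prod_snoc: "fst (wr_prod (xs @ [s])) = fst (wr_prod xs) + fst s"
  by (simp add: wr_prod_snoc wr_mult_def)

lemma snd_wr_prod_snoc:
  "snd (wr_prod (xs @ [s])) z = snd (wr_prod xs) z + snd s (z - fst (wr_prod xs))"
  by (simp add: wr_prod_snoc wr_mult_def)

definition conf_shift :: "int \<Rightarrow> (int \<Rightarrow> 'f) \<Rightarrow> int \<Rightarrow> 'f" where
  "conf_shift c \<phi> = (\<lambda>z. \<phi> (z + c))"

lemma conf_shift_upd: "conf_shift c (\<phi>(z := e)) = (conf_shift c \<phi>)(z - c := e)"
  by (auto simp: conf_shift_def fun_eq_iff)

lemma finite_support_conf_shift [simp]:
  "finite {z. \<phi> z \<noteq> 0} \<Longrightarrow> finite {z. conf_shift c \<phi> z \<noteq> 0}"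
  by (simp add: conf_shift_def finite_support_shift)

lemma writing_path_iff_word:
  "(\<exists>p. writing_path S \<phi> x y k p) \<longleftrightarrow>
   (\<exists>ws. set ws \<subseteq> S \<and> length ws = k \<and> wr_prod ws = (y - x, conf_shift x \<phi>))"
proof
  assume "\<exists>p. writing_path S \<phi> x y k p"
  then obtain p where p: "writing_path S \<phi> x y k p" by blast
  define f where "f i = wr_mult (wr_inv (p i)) (p (Suc i))" for i
  have partial: "wr_mult (p 0) (wr_prod (map f [0..<j])) = p j" for j
  proof (induction j)
    case (Suc j)
    have "wr_mult (p 0) (wr_prod (map f [0..<Suc j])) = wr_mult (wr_mult (p 0) (wr_prod (map f [0..<j]))) (f j)"
      by (simp add: wr_prod_snoc wr_mult_assoc)
    also have "\<dots> = p (Suc j)"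
      by (simp only: Suc.IH) (simp add: f_def)
    finally show ?case .
  qed simp
  have "wr_prod (map f [0..<k]) = wr_mult (wr_inv (p 0)) (p k)"
    using wr_inv_mult_cancel[of "p 0" "wr_prod (map f [0..<k])"] partial[of k] by simp
  also have "\<dots> = (y - x, conf_shift x \<phi>)"
    using p by (simp add: writing_path_def wr_inv_Pair wr_mult_Pair conf_shift_def)
  finally show "\<exists>ws. set ws \<subseteq> S \<and> length ws = k \<and> wr_prod ws = (y - x, conf_shift x \<phi>)"
    using p by (intro exI[of _ "map f [0..<k]"]) (auto simp: f_def writing_path_def)
next
  assume "\<exists>ws. set ws \<subseteq> S \<and> length ws = k \<and> wr_prod ws = (y - x, conf_shift x \<phi>)"
  then obtain ws where ws: "set ws \<subseteq> S" "length ws = k" "wr_prod ws = (y - x, conf_shift x \<phi>)"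
    by blast
  define p where "p i = wr_mult (x, \<lambda>_. 0) (wr_prod (take i ws))" for i
  have "p 0 = (x, \<lambda>_. 0)"
    by (simp add: p_def wr_one_def wr_mult_Pair)
  moreover have "p k = (y, \<phi>)"
    using ws by (simp add: p_def wr_mult_Pair conf_shift_def)
  moreover have "wr_mult (wr_inv (p i)) (p (Suc i)) \<in> S" if "i < k" for i
  proof -
    have "take (Suc i) ws = take i ws @ [ws ! i]"
      using that ws by (simp add: take_Suc_conv_app_nth)
    then have "p (Suc i) = wr_mult (p i) (ws ! i)"
      by (simp add: p_def wr_prod_snoc wr_mult_assoc)
    then show ?thesis using that ws by (auto simp: nth_mem)
  qed
  ultimately show "\<exists>p. writing_path S \<phi> x y k p"
    unfolding writing_path_def by blast
qed

definition wr_lamp :: "int \<Rightarrow> 'f::group_add \<Rightarrow> int \<times> (int \<Rightarrow> 'f)" where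
  "wr_lamp j e = (0, \<lambda>z. if z = j then e else 0)"

lemma wr_lamp_closed [simp]: "wr_lamp j e \<in> wr_carrier"
  by (auto simp: wr_lamp_def intro: finite_subset[of _ "{j}"])

section \<open>The word metric of a generating set\<close>

locale wr_word_metric =
  fixes S :: "(int \<times> (int \<Rightarrow> 'f::{finite,group_add})) set"
  assumes generating: "wr_symmetric_generating_set S"
begin

lemma finite_S: "finite S" and S_subset_carrier: "S \<subseteq> wr_carrier"
  and words_eq_carrier: "wr_words S = wr_carrier"
  using generating by (auto simp: wr_symmetric_generating_set_def)

lemma wr_prod_closed: "set ws \<subseteq> S \<Longrightarrow> wr_prod ws \<in> wr_carrier"
  by (induction ws) (use S_subset_carrier in \<open>auto intro: wr_mult_closed\<close>)

lemma word_exists: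
  assumes "g \<in> wr_carrier"
  shows "\<exists>ws. set ws \<subseteq> S \<and> wr_prod ws = g"
proof -
  have "g \<in> wr_words S" using assms words_eq_carrier by simp
  then show ?thesis
  proof (induction rule: wr_words.induct)
    case one
    then show ?case by (intro exI[of _ "[]"]) simp
  next
    case (step g s)
    then obtain ws where "set ws \<subseteq> S" "wr_prod ws = g" by blast
    then show ?case using step by (intro exI[of _ "ws @ [s]"]) (simp add: wr_prod_snoc)
  qed
qed

definition word_length :: "int \<times> (int \<Rightarrow> 'f) \<Rightarrow> nat" where
  "word_length g = (LEAST k. \<exists>ws. set ws \<subseteq> S \<and> length ws = k \<and> wr_prod ws = g)"

lemma shortest_word:
  assumes "g \<in> wr_carrier"
  obtains ws where "set ws \<subseteq> S" "length ws = word_length g" "wr_prod ws = g"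
proof -
  obtain ws where "set ws \<subseteq> S" "wr_prod ws = g" using word_exists assms by blast
  then have "\<exists>k ws. set ws \<subseteq> S \<and> length ws = k \<and> wr_prod ws = g" by blast
  then have "\<exists>ws. set ws \<subseteq> S \<and> length ws = word_length g \<and> wr_prod ws = g"
    unfolding word_length_def by (rule LeastI_ex)
  then show ?thesis using that by blast
qed

lemma word_length_le: "set ws \<subseteq> S \<Longrightarrow> word_length (wr_prod ws) \<le> length ws"
  unfolding word_length_def by (rule Least_le) blast

lemma word_length_mult:
  assumes "a \<in> wr_carrier" "b \<in> wr_carrier"
  shows "word_length (wr_mult a b) \<le> word_length a + word_length b"
proof -
  obtain us where "set us \<subseteq> S" "length us = word_length a" "wr_prod us = a"
    using shortest_word assms(1) by blast
  moreover obtain vs where "set vs \<subseteq> S" "length vs = word_length b" "wr_prod vs = b"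
    using shortest_word assms(2) by blast
  ultimately show ?thesis
    using word_length_le[of "us @ vs"] by (simp add: wr_prod_append)
qed

lemma TSP_eq_word_length: "TSP S \<phi> x y = word_length (y - x, conf_shift x \<phi>)"
  unfolding TSP_def word_length_def writing_path_iff_word ..

definition R :: int where
  "R = Max (insert 0 (abs ` (\<Union>s\<in>S. insert (fst s) {z. snd s z \<noteq> 0})))"

lemma
  shows R_nonneg: "0 \<le> R"
    and abs_fst_le_R: "s \<in> S \<Longrightarrow> \<bar>fst s\<bar> \<le> R"
    and abs_le_R_if_lamp: "s \<in> S \<Longrightarrow> snd s z \<noteq> 0 \<Longrightarrow> \<bar>z\<bar> \<le> R"
proof -
  have "finite {z. snd s z \<noteq> 0}" if "s \<in> S" for s
    using that S_subset_carrier by (cases s) auto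
  then have fin: "finite (insert 0 (abs ` (\<Union>s\<in>S. insert (fst s) {z. snd s z \<noteq> 0})))"
    using finite_S by auto
  show "0 \<le> R"
    unfolding R_def using fin by (intro Max_ge) auto
  show "\<bar>fst s\<bar> \<le> R" if "s \<in> S"
    unfolding R_def using fin that by (intro Max_ge) auto
  show "\<bar>z\<bar> \<le> R" if "s \<in> S" "snd s z \<noteq> 0"
    unfolding R_def using fin that by (intro Max_ge) auto
qed

lemma abs_fst_wr_prod_le: "set ws \<subseteq> S \<Longrightarrow> \<bar>fst (wr_prod ws)\<bar> \<le> R * int (length ws)"
proof (induction ws rule: rev_induct)
  case (snoc s xs)
  then have "\<bar>fst s\<bar> \<le> R" using abs_fst_le_R by auto
  then show ?case using snoc by (simp add: fst_wr_prod_snoc algebra_simps)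
qed simp

lemma word_reaches:
  assumes "set ws \<subseteq> S" "0 \<le> w" "w \<le> fst (wr_prod ws)"
  shows "\<exists>us vs. ws = us @ vs \<and> \<bar>fst (wr_prod us) - w\<bar> \<le> R \<and>
           (\<forall>j<length us. fst (wr_prod (take j us)) < w)"
proof -
  define P where "P j \<longleftrightarrow> w \<le> fst (wr_prod (take j ws))" for j
  have "P (length ws)" using assms by (simp add: P_def)
  define j0 where "j0 = (LEAST j. P j)"
  have Pj0: "P j0" and j0_le: "j0 \<le> length ws"
    unfolding j0_def using \<open>P (length ws)\<close> by (rule LeastI, rule Least_le)
  have not_P: "\<not> P j" if "j < j0" for j
    using that unfolding j0_def by (rule not_less_Least)
  show ?thesis
  proof (cases j0)
    case 0
    then have "w = 0" using Pj0 assms by (simp add: P_def)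
    then show ?thesis using R_nonneg by (intro exI[of _ "[]"] exI[of _ ws]) simp
  next
    case (Suc i)
    have i: "i < length ws" using Suc j0_le by simp
    have take_Suc: "take (Suc i) ws = take i ws @ [ws ! i]"
      using i by (simp add: take_Suc_conv_app_nth)
    have "ws ! i \<in> S" using i assms(1) nth_mem by blast
    moreover have "fst (wr_prod (take i ws)) < w" using not_P[of i] Suc by (simp add: P_def)
    moreover have "w \<le> fst (wr_prod (take i ws)) + fst (ws ! i)"
      using Pj0 Suc by (simp add: P_def take_Suc fst_wr_prod_snoc)
    ultimately have "\<bar>fst (wr_prod (take j0 ws)) - w\<bar> \<le> R"
      using abs_fst_le_R Suc by (fastforce simp: take_Suc fst_wr_prod_snoc)
    moreover have "\<forall>j<length (take j0 ws). fst (wr_prod (take j (take j0 ws))) < w"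
      using not_P j0_le by (auto simp: P_def min_def not_le)
    ultimately show ?thesis by (intro exI[of _ "take j0 ws"] exI[of _ "drop j0 ws"]) simp
  qed
qed

lemma lamps_beyond_unreached:
  assumes "set us \<subseteq> S" "\<forall>j<length us. fst (wr_prod (take j us)) < w" "w + R \<le> z"
  shows "snd (wr_prod us) z = 0"
  using assms
proof (induction us rule: rev_induct)
  case (snoc s xs)
  have "\<forall>j<length xs. fst (wr_prod (take j xs)) < w"
    using snoc.prems(2) by (metis butlast_snoc length_append_singleton less_SucI take_butlast)
  then have "snd (wr_prod xs) z = 0" using snoc by simp
  moreover have "fst (wr_prod xs) < w"
    using snoc.prems(2)[rule_format, of "length xs"] by simp
  then have "snd s (z - fst (wr_prod xs)) = 0"
    using abs_le_R_if_lamp[of s "z - fst (wr_prod xs)"] snoc.prems by force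
  ultimately show ?case by (simp add: snd_wr_prod_snoc)
qed simp

lemma word_visits_lamp:
  assumes "set ws \<subseteq> S" "snd (wr_prod ws) v \<noteq> 0"
  shows "\<exists>us vs. ws = us @ vs \<and> \<bar>fst (wr_prod us) - v\<bar> \<le> R"
  using assms
proof (induction ws rule: rev_induct)
  case (snoc s xs)
  show ?case
  proof (cases "snd (wr_prod xs) v = 0")
    case True
    then have "snd s (v - fst (wr_prod xs)) \<noteq> 0"
      using snoc.prems by (simp add: snd_wr_prod_snoc)
    then have "\<bar>v - fst (wr_prod xs)\<bar> \<le> R"
      using abs_le_R_if_lamp[of s "v - fst (wr_prod xs)"] snoc.prems by simp
    then show ?thesis by (intro exI[of _ xs] exI[of _ "[s]"]) simp
  next
    case False
    then obtain us vs where "xs = us @ vs" "\<bar>fst (wr_prod us) - v\<bar> \<le> R"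
      using snoc by auto
    then show ?thesis by (intro exI[of _ us] exI[of _ "vs @ [s]"]) simp
  qed
qed simp

lemma word_passes:
  assumes "set ws \<subseteq> S" "snd (wr_prod ws) v \<noteq> 0" "0 \<le> w" "w \<le> v"
  shows "\<exists>us vs. ws = us @ vs \<and> \<bar>fst (wr_prod us) - w\<bar> \<le> 2 * R"
proof -
  obtain us0 vs0 where u0: "ws = us0 @ vs0" "\<bar>fst (wr_prod us0) - v\<bar> \<le> R"
    using word_visits_lamp assms by blast
  show ?thesis
  proof (cases "w \<le> fst (wr_prod us0)")
    case True
    have "set us0 \<subseteq> S" using assms u0 by auto
    then obtain us vs where "us0 = us @ vs" "\<bar>fst (wr_prod us) - w\<bar> \<le> R"
      using word_reaches[of us0 w] True assms by blast
    then show ?thesis using u0 R_nonneg by (intro exI[of _ us] exI[of _ "vs @ vs0"]) auto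
  next
    case False
    then show ?thesis using u0 assms R_nonneg by (intro exI[of _ us0] exI[of _ vs0]) auto
  qed
qed

lemma word_first_passage:
  assumes "set ws \<subseteq> S" "snd (wr_prod ws) m \<noteq> 0" "0 \<le> m"
  shows "\<exists>us vs. ws = us @ vs \<and> \<bar>fst (wr_prod us) - m\<bar> \<le> 2 * R \<and>
    (\<forall>z\<ge>m. snd (wr_prod us) z = 0)"
proof -
  obtain us0 vs0 where u0: "ws = us0 @ vs0" "\<bar>fst (wr_prod us0) - m\<bar> \<le> R"
    using word_visits_lamp assms by blast
  show ?thesis
  proof (cases "0 \<le> m - R")
    case True
    have us0: "set us0 \<subseteq> S" using assms u0 by auto
    have "m - R \<le> fst (wr_prod us0)" using u0 by (auto simp: abs_le_iff)
    then obtain us vs where uv: "us0 = us @ vs" "\<bar>fst (wr_prod us) - (m - R)\<bar> \<le> R"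
       "\<forall>j<length us. fst (wr_prod (take j us)) < m - R"
      using word_reaches[OF us0 True] by blast
    have "set us \<subseteq> S" using us0 uv by auto
    then have "\<forall>z\<ge>m. snd (wr_prod us) z = 0"
      using lamps_beyond_unreached uv(3) by auto
    then show ?thesis
      using u0 uv by (intro exI[of _ us] exI[of _ "vs @ vs0"]) (auto simp: abs_le_iff)
  next
    case False
    then show ?thesis using assms R_nonneg by (intro exI[of _ "[]"] exI[of _ ws]) auto
  qed
qed

definition move_cost :: nat where
  "move_cost = max (word_length (1, \<lambda>_. 0)) (word_length (-1, \<lambda>_. 0))"

lemma word_length_move_multiple:
  "word_length (int n * s, \<lambda>_. 0) \<le> n * word_length (s, \<lambda>_. 0)"
proof (induction n)
  case 0
  then show ?case using word_length_le[of "[]"] by (simp add: wr_one_def)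
next
  case (Suc n)
  have "(int (Suc n) * s, \<lambda>_. 0) = wr_mult (s, \<lambda>_. 0) (int n * s, \<lambda>_. (0::'f))"
    by (simp add: wr_mult_Pair algebra_simps)
  then have "word_length (int (Suc n) * s, \<lambda>_. 0)
      \<le> word_length (s, \<lambda>_. 0) + word_length (int n * s, \<lambda>_. (0::'f))"
    using word_length_mult[of "(s, \<lambda>_. 0)" "(int n * s, \<lambda>_. 0)"] by simp
  then show ?case using Suc by simp
qed

lemma word_length_move: "word_length (k, \<lambda>_. 0) \<le> move_cost * nat \<bar>k\<bar>"
proof -
  have "k = int (nat \<bar>k\<bar>) * sgn k" by (simp add: abs_mult_sgn)
  then have "word_length (k, \<lambda>_. 0) \<le> nat \<bar>k\<bar> * word_length (sgn k, \<lambda>_. (0::'f))"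
    by (metis word_length_move_multiple)
  moreover have "k \<noteq> 0 \<Longrightarrow> word_length (sgn k, \<lambda>_. (0::'f)) \<le> move_cost"
    by (auto simp: sgn_if move_cost_def)
  ultimately show ?thesis by (cases "k = 0") (auto simp: mult.commute intro: order.trans)
qed

definition lamp_cost :: nat where
  "lamp_cost = Max (range (\<lambda>e. word_length (wr_lamp 0 e)))"

lemma word_length_conf_shift:
  assumes "finite {z. f z \<noteq> 0}"
  shows "word_length (0, conf_shift c f) \<le> word_length (0, f) + 2 * move_cost * nat \<bar>c\<bar>"
proof -
  have "(0, conf_shift c f) = wr_mult (wr_mult (- c, \<lambda>_. 0) (0, f)) (c, \<lambda>_. 0)"
    by (simp add: wr_mult_Pair conf_shift_def)
  then have "word_length (0, conf_shift c f)
      \<le> word_length (- c, \<lambda>_. (0::'f)) + word_length (0, f) + word_length (c, \<lambda>_. (0::'f))"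
    using assms word_length_mult[of "wr_mult (- c, \<lambda>_. 0) (0, f)" "(c, \<lambda>_. 0)"]
      word_length_mult[of "(- c, \<lambda>_. 0)" "(0, f)"]
    by (simp add: wr_mult_closed)
  then show ?thesis using word_length_move[of c] word_length_move[of "- c"] by simp
qed

lemma word_length_lamp: "word_length (wr_lamp j e) \<le> lamp_cost + 2 * move_cost * nat \<bar>j\<bar>"
proof -
  have "wr_lamp j e = (0, conf_shift (- j) (snd (wr_lamp 0 e)))"
    by (auto simp: wr_lamp_def conf_shift_def fun_eq_iff)
  moreover have "word_length (0, snd (wr_lamp 0 e)) \<le> lamp_cost"
    unfolding lamp_cost_def by (rule Max_ge) (auto simp: wr_lamp_def)
  moreover have "finite {z. snd (wr_lamp 0 e) z \<noteq> 0}"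
    using wr_lamp_closed[of 0 e] by (simp add: wr_lamp_def)
  ultimately show ?thesis
    using word_length_conf_shift[of "snd (wr_lamp 0 e)" "- j"] by simp
qed

lemma word_length_lamp_move:
  "word_length (wr_mult (wr_lamp j e) (k, \<lambda>_. 0))
    \<le> lamp_cost + 2 * move_cost * nat \<bar>j\<bar> + move_cost * nat \<bar>k\<bar>"
  using word_length_mult[of "wr_lamp j e" "(k, \<lambda>_. 0)"] word_length_lamp[of j e] word_length_move[of k]
  by simp

lemma word_length_splice:
  assumes "set us \<subseteq> S" "set vs \<subseteq> S" "length (us @ vs) = word_length (wr_prod (us @ vs))"
    and "t \<in> wr_carrier"
  shows "word_length (wr_mult (wr_prod us) (wr_mult t (wr_prod vs)))
    \<le> word_length (wr_prod (us @ vs)) + word_length t"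
proof -
  have "word_length (wr_mult (wr_prod us) (wr_mult t (wr_prod vs)))
      \<le> word_length (wr_prod us) + (word_length t + word_length (wr_prod vs))"
    using assms wr_prod_closed word_length_mult wr_mult_closed by (meson add_left_mono order_trans)
  also have "\<dots> \<le> length us + word_length t + length vs"
    using word_length_le assms(1,2) by (simp add: add_mono)
  finally show ?thesis using assms(3) by simp
qed

text \<open>The lamp is switched by a detour spliced into a shortest word where it passes near
  \<open>w\<close>: conjugated by the prefix, the change becomes a lamp within distance \<open>Q\<close> of the
  origin.\<close>

lemma word_length_set_lamp:
  assumes "g \<in> wr_carrier" "0 \<le> Q"
    and visits: "\<And>ws. set ws \<subseteq> S \<Longrightarrow> wr_prod ws = g \<Longrightarrow>
      \<exists>us vs. ws = us @ vs \<and> \<bar>fst (wr_prod us) - w\<bar> \<le> Q"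
  shows "word_length (fst g, (snd g)(w := e)) \<le> word_length g + lamp_cost + 2 * move_cost * nat Q"
proof -
  obtain ws where ws: "set ws \<subseteq> S" "length ws = word_length g" "wr_prod ws = g"
    using shortest_word assms(1) by blast
  obtain us vs where uv: "ws = us @ vs" "\<bar>fst (wr_prod us) - w\<bar> \<le> Q"
    using visits ws by blast
  obtain p \<alpha> where p: "wr_prod us = (p, \<alpha>)" by fastforce
  define t where "t = wr_mult (wr_mult (wr_inv (wr_prod us)) (wr_lamp w (e - snd g w))) (wr_prod us)"
  have "t = (0, \<lambda>z. - \<alpha> (z + p) + (if z + p = w then e - snd g w else 0) + \<alpha> (z + p))"
    by (simp add: t_def p wr_mult_Pair wr_inv_Pair wr_lamp_def)
  then have t: "t = wr_lamp (w - p) (snd t (w - p))"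
    unfolding wr_lamp_def by (auto simp: fun_eq_iff)
  have "wr_mult (wr_lamp w (e - snd g w)) g = (fst g, (snd g)(w := e))"
    by (cases g) (auto simp: wr_lamp_def wr_mult_Pair fun_eq_iff)
  then have "(fst g, (snd g)(w := e)) = wr_mult (wr_prod us) (wr_mult t (wr_prod vs))"
    using ws uv by (simp add: t_def wr_mult_assoc wr_prod_append)
  then have "word_length (fst g, (snd g)(w := e)) \<le> word_length g + word_length t"
    using word_length_splice[of us vs t] ws uv t by (metis set_append le_sup_iff wr_lamp_closed)
  moreover have "nat \<bar>w - p\<bar> \<le> nat Q" using uv p by simp
  then have "word_length t \<le> lamp_cost + 2 * move_cost * nat Q"
    using t word_length_lamp[of "w - p"] by (metis add_left_mono mult_le_mono2 order_trans)
  ultimately show ?thesis by simp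
qed

lemma word_length_set_lamp_near:
  assumes "g \<in> wr_carrier" "snd g v \<noteq> 0" "\<bar>w - v\<bar> \<le> 1"
  shows "word_length (fst g, (snd g)(w := e))
    \<le> word_length g + lamp_cost + 2 * move_cost * nat (R + 1)"
proof (rule word_length_set_lamp[OF assms(1)])
  fix ws assume "set ws \<subseteq> S" "wr_prod ws = g"
  then obtain us vs where "ws = us @ vs" "\<bar>fst (wr_prod us) - v\<bar> \<le> R"
    using word_visits_lamp assms by blast
  then show "\<exists>us vs. ws = us @ vs \<and> \<bar>fst (wr_prod us) - w\<bar> \<le> R + 1"
    using assms(3) by auto
qed (use R_nonneg in simp)

lemma word_length_set_lamp_before_lit:
  assumes "g \<in> wr_carrier" "snd g v \<noteq> 0" "0 \<le> w" "w \<le> v"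
  shows "word_length (fst g, (snd g)(w := e))
    \<le> word_length g + lamp_cost + 2 * move_cost * nat (2 * R)"
proof (rule word_length_set_lamp[OF assms(1)])
  fix ws assume "set ws \<subseteq> S" "wr_prod ws = g"
  then show "\<exists>us vs. ws = us @ vs \<and> \<bar>fst (wr_prod us) - w\<bar> \<le> 2 * R"
    using word_passes assms by blast
qed (use R_nonneg in simp)

end

section \<open>Tours through a block of lamps\<close>

definition last_lamp :: "nat \<Rightarrow> (int \<Rightarrow> 'f::zero) \<Rightarrow> int" where
  "last_lamp n \<phi> = Max (insert 0 {z \<in> {1..int n}. \<phi> z \<noteq> 0})"

lemma
  shows last_lamp_le: "last_lamp n \<phi> \<le> int n"
    and last_lamp_ge: "z \<in> {1..int n} \<Longrightarrow> \<phi> z \<noteq> 0 \<Longrightarrow> z \<le> last_lamp n \<phi>"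
    and last_lamp_lit: "last_lamp n \<phi> \<noteq> 0 \<Longrightarrow> last_lamp n \<phi> \<in> {1..int n} \<and> \<phi> (last_lamp n \<phi>) \<noteq> 0"
proof -
  have fin: "finite (insert 0 {z \<in> {1..int n}. \<phi> z \<noteq> 0})"
    by (rule finite_subset[of _ "insert 0 {1..int n}"]) auto
  show "last_lamp n \<phi> \<le> int n"
    unfolding last_lamp_def using fin by (subst Max_le_iff) auto
  show "z \<le> last_lamp n \<phi>" if "z \<in> {1..int n}" "\<phi> z \<noteq> 0"
    unfolding last_lamp_def using fin that by (intro Max_ge) auto
  have "last_lamp n \<phi> \<in> insert 0 {z \<in> {1..int n}. \<phi> z \<noteq> 0}"
    unfolding last_lamp_def using fin by (intro Max_in) auto
  then show "last_lamp n \<phi> \<noteq> 0 \<Longrightarrow> last_lamp n \<phi> \<in> {1..int n} \<and> \<phi> (last_lamp n \<phi>) \<noteq> 0"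
    by auto
qed

lemma restr_conf_upd: "z \<in> {1..int n} \<Longrightarrow> restr_conf (\<phi>(z := e)) n = (restr_conf \<phi> n)(z := e)"
  by (auto simp: restr_conf_def fun_eq_iff)

lemma restr_conf_idem [simp]: "restr_conf (restr_conf \<phi> n) n = restr_conf \<phi> n"
  by (auto simp: restr_conf_def fun_eq_iff)

context wr_word_metric
begin

abbreviation open_tour :: "nat \<Rightarrow> (int \<Rightarrow> 'f) \<Rightarrow> nat" where
  "open_tour n \<phi> \<equiv> TSP S (restr_conf \<phi> n) 1 (int n)"

abbreviation closed_tour :: "nat \<Rightarrow> (int \<Rightarrow> 'f) \<Rightarrow> nat" where
  "closed_tour n \<phi> \<equiv> TSP S (restr_conf \<phi> n) 1 1"

lemma restr_conf_closed: "(k, conf_shift c (restr_conf \<phi> n)) \<in> wr_carrier"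
  by simp

lemma open_tour_set_lamp_le:
  assumes "z \<in> {1..int n}"
  shows "open_tour n (\<phi>(z := e)) \<le> open_tour n \<phi> + lamp_cost + 2 * move_cost * nat R"
proof -
  let ?g = "(int n - 1, conf_shift 1 (restr_conf \<phi> n))"
  have "word_length (fst ?g, (snd ?g)(z - 1 := e)) \<le> word_length ?g + lamp_cost + 2 * move_cost * nat R"
  proof (rule word_length_set_lamp[OF restr_conf_closed R_nonneg])
    fix ws assume "set ws \<subseteq> S" "wr_prod ws = ?g"
    then show "\<exists>us vs. ws = us @ vs \<and> \<bar>fst (wr_prod us) - (z - 1)\<bar> \<le> R"
      using word_reaches[of ws "z - 1"] assms by auto
  qed
  then show ?thesis using assms by (simp add: TSP_eq_word_length restr_conf_upd conf_shift_upd)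
qed

lemma open_tour_Suc_le: "open_tour (Suc n) \<phi> \<le> open_tour n \<phi> + lamp_cost + 3 * move_cost"
proof -
  let ?e = "\<phi> (int n + 1)"
  have eq: "(int (Suc n) - 1, conf_shift 1 (restr_conf \<phi> (Suc n))) =
      wr_mult (int n - 1, conf_shift 1 (restr_conf \<phi> n)) (wr_mult (wr_lamp 1 ?e) (1, \<lambda>_. 0))"
    by (auto simp: wr_mult_Pair wr_lamp_def conf_shift_def restr_conf_def fun_eq_iff)
  have "open_tour (Suc n) \<phi> \<le> open_tour n \<phi> + word_length (wr_mult (wr_lamp 1 ?e) (1, \<lambda>_. 0))"
    unfolding TSP_eq_word_length eq
    by (rule word_length_mult) (auto intro!: wr_mult_closed restr_conf_closed)
  then show ?thesis using word_length_lamp_move[of 1 ?e 1] by simp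
qed

lemma open_tour_le_Suc: "open_tour n \<phi> \<le> open_tour (Suc n) \<phi> + lamp_cost + 3 * move_cost"
proof -
  let ?e = "- \<phi> (int n + 1)"
  have eq: "(int n - 1, conf_shift 1 (restr_conf \<phi> n)) =
      wr_mult (int (Suc n) - 1, conf_shift 1 (restr_conf \<phi> (Suc n))) (wr_mult (wr_lamp 0 ?e) (-1, \<lambda>_. 0))"
    by (auto simp: wr_mult_Pair wr_lamp_def conf_shift_def restr_conf_def fun_eq_iff)
  have "open_tour n \<phi> \<le> open_tour (Suc n) \<phi> + word_length (wr_mult (wr_lamp 0 ?e) (-1, \<lambda>_. 0))"
    unfolding TSP_eq_word_length eq
    by (rule word_length_mult) (auto intro!: wr_mult_closed restr_conf_closed)
  then show ?thesis using word_length_lamp_move[of 0 ?e "-1"] by simp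
qed

lemma open_tour_add_le:
  "open_tour (m + n) \<phi> \<le> open_tour m \<phi> + open_tour n (conf_shift (int m) \<phi>) + move_cost"
proof -
  have eq: "(int (m + n) - 1, conf_shift 1 (restr_conf \<phi> (m + n))) =
      wr_mult (wr_mult (int m - 1, conf_shift 1 (restr_conf \<phi> m)) (1, \<lambda>_. 0))
        (int n - 1, conf_shift 1 (restr_conf (conf_shift (int m) \<phi>) n))"
    by (auto simp: wr_mult_Pair conf_shift_def restr_conf_def fun_eq_iff)
  have "open_tour (m + n) \<phi>
      \<le> word_length (wr_mult (int m - 1, conf_shift 1 (restr_conf \<phi> m)) (1, \<lambda>_. 0))
        + open_tour n (conf_shift (int m) \<phi>)"
    unfolding TSP_eq_word_length eq
    by (rule word_length_mult) (auto intro!: wr_mult_closed restr_conf_closed)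
  also have "\<dots> \<le> open_tour m \<phi> + word_length (1, \<lambda>_. (0::'f)) + open_tour n (conf_shift (int m) \<phi>)"
    unfolding TSP_eq_word_length
    using word_length_mult[OF restr_conf_closed, of "(1, \<lambda>_. 0)"] by simp
  finally show ?thesis using word_length_move[of 1] by simp
qed

lemma open_tour_lower_bound: "int n - 1 \<le> R * int (open_tour n \<phi>)"
proof -
  obtain ws where "set ws \<subseteq> S" "length ws = open_tour n \<phi>"
    "wr_prod ws = (int n - 1, conf_shift 1 (restr_conf \<phi> n))"
    using shortest_word[OF restr_conf_closed] by (metis TSP_eq_word_length)
  then show ?thesis using abs_fst_wr_prod_le[of ws] by simp
qed

lemma R_pos: "R > 0"
  using open_tour_lower_bound[of 2 "\<lambda>_. 0"] R_nonneg by (cases "R = 0") auto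

end

text \<open>A lit marker lamp at \<open>n + 1\<close> forces a closed tour to reach \<open>n + 1\<close>, which is
  what makes marked tours subadditive; erasing the marker is cheap when a lamp near \<open>n\<close>
  is lit.\<close>

locale wr_marked_tours = wr_word_metric S for S :: "(int \<times> (int \<Rightarrow> 'f::{finite,group_add})) set" +
  fixes a :: 'f
  assumes marker_nonzero: "a \<noteq> 0"
begin

definition marked_conf :: "nat \<Rightarrow> (int \<Rightarrow> 'f) \<Rightarrow> int \<Rightarrow> 'f" where
  "marked_conf n \<phi> = (restr_conf \<phi> n)(int n + 1 := a)"

abbreviation marked_tour :: "nat \<Rightarrow> (int \<Rightarrow> 'f) \<Rightarrow> nat" where
  "marked_tour n \<phi> \<equiv> TSP S (marked_conf n \<phi>) 1 1"

lemma finite_support_marked_conf [simp]: "finite {z. marked_conf n \<phi> z \<noteq> 0}"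
  unfolding marked_conf_def by (simp add: finite_support_upd del: fun_upd_apply)

lemma marker_lit: "conf_shift 1 (marked_conf n \<phi>) (int n) = a"
  by (simp add: conf_shift_def marked_conf_def)

lemma marked_conf_restr_conf [simp]: "marked_conf n (restr_conf \<phi> n) = marked_conf n \<phi>"
  by (simp add: marked_conf_def)

lemma shortest_marked_tour:
  obtains ws where "set ws \<subseteq> S" "length ws = marked_tour n \<phi>"
    "wr_prod ws = (0, conf_shift 1 (marked_conf n \<phi>))"
proof -
  have "(0, conf_shift 1 (marked_conf n \<phi>)) \<in> wr_carrier" by simp
  then obtain ws where "set ws \<subseteq> S" "length ws = word_length (0, conf_shift 1 (marked_conf n \<phi>))"
    "wr_prod ws = (0, conf_shift 1 (marked_conf n \<phi>))"
    by (rule shortest_word)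
  then show thesis using that by (simp add: TSP_eq_word_length)
qed

lemma marked_tour_set_lamp_le:
  assumes "z \<in> {1..int n}"
  shows "marked_tour n (\<phi>(z := e)) \<le> marked_tour n \<phi> + lamp_cost + 2 * move_cost * nat (2 * R)"
proof -
  let ?g = "(0::int, conf_shift 1 (marked_conf n \<phi>))"
  have "word_length (fst ?g, (snd ?g)(z - 1 := e))
      \<le> word_length ?g + lamp_cost + 2 * move_cost * nat (2 * R)"
    using assms marker_lit marker_nonzero by (intro word_length_set_lamp_before_lit[of _ "int n"]) auto
  moreover have "marked_conf n (\<phi>(z := e)) = (marked_conf n \<phi>)(z := e)"
    using assms by (auto simp: marked_conf_def restr_conf_def fun_eq_iff)
  ultimately show ?thesis by (simp add: TSP_eq_word_length conf_shift_upd)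
qed

lemma marked_tour_Suc_le:
  "marked_tour (Suc n) \<phi> \<le> marked_tour n \<phi> + 2 * (lamp_cost + 2 * move_cost * nat (R + 1))"
proof -
  define g where "g = (0::int, conf_shift 1 (marked_conf n \<phi>))"
  define g1 where "g1 = (fst g, (snd g)(int n + 1 := a))"
  define g2 where "g2 = (fst g1, (snd g1)(int n := \<phi> (int n + 1)))"
  have g: "g \<in> wr_carrier" by (simp add: g_def)
  have g1: "g1 \<in> wr_carrier" unfolding g1_def by (rule wr_carrier_set_lamp[OF g])
  have "word_length g1 \<le> word_length g + lamp_cost + 2 * move_cost * nat (R + 1)"
    unfolding g1_def
    by (rule word_length_set_lamp_near[OF g, of "int n"]) (auto simp: g_def marker_lit marker_nonzero)
  moreover have "word_length g2 \<le> word_length g1 + lamp_cost + 2 * move_cost * nat (R + 1)"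
    unfolding g2_def
    by (rule word_length_set_lamp_near[OF g1, of "int n + 1"]) (auto simp: g1_def marker_nonzero)
  moreover have "g2 = (0, conf_shift 1 (marked_conf (Suc n) \<phi>))"
    by (auto simp: g2_def g1_def g_def conf_shift_def marked_conf_def restr_conf_def fun_eq_iff)
  ultimately show ?thesis by (simp add: TSP_eq_word_length g_def)
qed

lemma marked_tour_le_Suc:
  "marked_tour n \<phi> \<le> marked_tour (Suc n) \<phi> + 2 * (lamp_cost + 2 * move_cost * nat (R + 1))"
proof -
  define g where "g = (0::int, conf_shift 1 (marked_conf (Suc n) \<phi>))"
  define g1 where "g1 = (fst g, (snd g)(int n := a))"
  define g2 where "g2 = (fst g1, (snd g1)(int n + 1 := 0))"
  have g: "g \<in> wr_carrier" by (simp add: g_def)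
  have g1: "g1 \<in> wr_carrier" unfolding g1_def by (rule wr_carrier_set_lamp[OF g])
  have "word_length g1 \<le> word_length g + lamp_cost + 2 * move_cost * nat (R + 1)"
    unfolding g1_def by (rule word_length_set_lamp_near[OF g, of "int n + 1"])
      (auto simp: g_def conf_shift_def marked_conf_def marker_nonzero)
  moreover have "word_length g2 \<le> word_length g1 + lamp_cost + 2 * move_cost * nat (R + 1)"
    unfolding g2_def
    by (rule word_length_set_lamp_near[OF g1, of "int n"]) (auto simp: g1_def marker_nonzero)
  moreover have "g2 = (0, conf_shift 1 (marked_conf n \<phi>))"
    by (auto simp: g2_def g1_def g_def conf_shift_def marked_conf_def restr_conf_def fun_eq_iff)
  ultimately show ?thesis by (simp add: TSP_eq_word_length g_def)
qed

lemma marked_tour_lower_bound: "int n - R \<le> R * int (marked_tour n \<phi>)"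
proof -
  obtain ws where ws: "set ws \<subseteq> S" "length ws = marked_tour n \<phi>"
    "wr_prod ws = (0, conf_shift 1 (marked_conf n \<phi>))"
    by (rule shortest_marked_tour)
  then obtain us vs where uv: "ws = us @ vs" "\<bar>fst (wr_prod us) - int n\<bar> \<le> R"
    using word_visits_lamp[of ws "int n"] marker_lit marker_nonzero by auto
  have "\<bar>fst (wr_prod us)\<bar> \<le> R * int (length us)"
    using abs_fst_wr_prod_le ws uv by simp
  also have "\<dots> \<le> R * int (marked_tour n \<phi>)"
    using ws uv R_nonneg by (intro mult_left_mono) auto
  finally show ?thesis using uv(2) by (auto simp: abs_le_iff)
qed

lemma closed_tour_le_marked_tour:
  "closed_tour n \<phi> \<le> marked_tour n \<phi> + lamp_cost + 2 * move_cost * nat (R + 1)"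
proof -
  have "(conf_shift 1 (marked_conf n \<phi>))(int n := 0) = conf_shift 1 (restr_conf \<phi> n)"
    by (auto simp: conf_shift_def marked_conf_def restr_conf_def fun_eq_iff)
  moreover have "word_length (0, (conf_shift 1 (marked_conf n \<phi>))(int n := 0))
      \<le> word_length (0, conf_shift 1 (marked_conf n \<phi>)) + lamp_cost + 2 * move_cost * nat (R + 1)"
    using word_length_set_lamp_near[of "(0, conf_shift 1 (marked_conf n \<phi>))" "int n" "int n"]
    by (simp add: marker_lit marker_nonzero)
  ultimately show ?thesis by (simp add: TSP_eq_word_length)
qed

lemma marked_tour_le_closed_tour:
  "marked_tour n \<phi> \<le> closed_tour n \<phi> + lamp_cost + 2 * move_cost * nat (int n - last_lamp n \<phi> + 1 + R)"
proof -
  let ?g = "(0::int, conf_shift 1 (restr_conf \<phi> n))"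
  have "word_length (fst ?g, (snd ?g)(int n := a))
      \<le> word_length ?g + lamp_cost + 2 * move_cost * nat (int n - last_lamp n \<phi> + 1 + R)"
  proof (rule word_length_set_lamp)
    fix ws assume ws: "set ws \<subseteq> S" "wr_prod ws = ?g"
    show "\<exists>us vs. ws = us @ vs \<and> \<bar>fst (wr_prod us) - int n\<bar> \<le> int n - last_lamp n \<phi> + 1 + R"
    proof (cases "last_lamp n \<phi> = 0")
      case True
      then show ?thesis using R_nonneg by (intro exI[of _ "[]"] exI[of _ ws]) simp
    next
      case False
      then have "last_lamp n \<phi> \<in> {1..int n}" "\<phi> (last_lamp n \<phi>) \<noteq> 0"
        using last_lamp_lit by auto
      moreover from this have "snd (wr_prod ws) (last_lamp n \<phi> - 1) \<noteq> 0"
        using ws by (simp add: conf_shift_def restr_conf_def)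
      ultimately show ?thesis using word_visits_lamp[OF ws(1)] by fastforce
    qed
  qed (use R_nonneg last_lamp_le[of n \<phi>] in simp_all)
  moreover have "(conf_shift 1 (restr_conf \<phi> n))(int n := a) = conf_shift 1 (marked_conf n \<phi>)"
    by (auto simp: conf_shift_def marked_conf_def restr_conf_def fun_eq_iff)
  ultimately show ?thesis by (simp add: TSP_eq_word_length)
qed

text \<open>Splicing the tour of the second block, translated to the end point of the first
  passage through \<open>m\<close>, into the tour of the first block writes the concatenated
  configuration, except possibly at the first marker \<open>m\<close>.\<close>

lemma splice_lamps:
  assumes first_block: "wr_mult (p, \<alpha>) (q, \<beta>) = (0, conf_shift 1 (marked_conf m \<phi>))"
    and unlit: "\<And>z. z \<ge> int m \<Longrightarrow> \<alpha> z = 0" and "z \<noteq> int m"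
  shows "snd (wr_mult (p, \<alpha>) (wr_mult
      (0, conf_shift (p - int m) (conf_shift 1 (marked_conf n (conf_shift (int m) \<phi>)))) (q, \<beta>))) z
    = conf_shift 1 (marked_conf (m + n) \<phi>) z"
proof -
  let ?\<chi> = "marked_conf n (conf_shift (int m) \<phi>)"
  have \<alpha>\<beta>: "\<alpha> z + \<beta> (z - p) = conf_shift 1 (marked_conf m \<phi>) z"
    using first_block by (auto simp: wr_mult_Pair fun_eq_iff)
  have spliced: "snd (wr_mult (p, \<alpha>) (wr_mult
      (0, conf_shift (p - int m) (conf_shift 1 ?\<chi>)) (q, \<beta>))) z = \<alpha> z + (?\<chi> (z + 1 - int m) + \<beta> (z - p))"
    by (simp add: wr_mult_Pair conf_shift_def algebra_simps)
  show ?thesis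
  proof (cases "z > int m")
    case True
    then have "\<alpha> z = 0" "conf_shift 1 (marked_conf m \<phi>) z = 0"
      using unlit by (auto simp: conf_shift_def marked_conf_def restr_conf_def)
    moreover have "?\<chi> (z + 1 - int m) = conf_shift 1 (marked_conf (m + n) \<phi>) z"
      using True by (auto simp: conf_shift_def marked_conf_def restr_conf_def algebra_simps)
    ultimately show ?thesis using spliced \<alpha>\<beta> by simp
  next
    case False
    then have "z < int m" using assms(3) by simp
    then have "?\<chi> (z + 1 - int m) = 0"
      and "conf_shift 1 (marked_conf m \<phi>) z = conf_shift 1 (marked_conf (m + n) \<phi>) z"
      by (auto simp: conf_shift_def marked_conf_def restr_conf_def)
    then show ?thesis using spliced \<alpha>\<beta> by simp
  qed
qed

lemma marked_tour_add_le:
  "marked_tour (m + n) \<phi>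
    \<le> marked_tour m \<phi> + marked_tour n (conf_shift (int m) \<phi>) + lamp_cost + 4 * move_cost * nat (2 * R)"
proof (cases "n = 0")
  case False
  let ?\<chi> = "conf_shift 1 (marked_conf n (conf_shift (int m) \<phi>))"
  obtain ws where ws: "set ws \<subseteq> S" "length ws = marked_tour m \<phi>"
    "wr_prod ws = (0, conf_shift 1 (marked_conf m \<phi>))"
    by (rule shortest_marked_tour)
  then obtain us vs where uv: "ws = us @ vs" "\<bar>fst (wr_prod us) - int m\<bar> \<le> 2 * R"
    "\<forall>z\<ge>int m. snd (wr_prod us) z = 0"
    using word_first_passage[of ws "int m"] marker_lit marker_nonzero by auto
  obtain p \<alpha> where p: "wr_prod us = (p, \<alpha>)" by fastforce
  obtain q \<beta> where q: "wr_prod vs = (q, \<beta>)" by fastforce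
  define t where "t = (0::int, conf_shift (p - int m) ?\<chi>)"
  define G where "G = wr_mult (wr_prod us) (wr_mult t (wr_prod vs))"
  have "word_length t \<le> word_length (0, ?\<chi>) + 2 * move_cost * nat \<bar>p - int m\<bar>"
    unfolding t_def by (rule word_length_conf_shift) simp
  also have "\<dots> \<le> marked_tour n (conf_shift (int m) \<phi>) + 2 * move_cost * nat (2 * R)"
    using uv(2) p by (simp add: TSP_eq_word_length nat_mono)
  finally have "word_length t \<le> marked_tour n (conf_shift (int m) \<phi>) + 2 * move_cost * nat (2 * R)" .
  moreover have "word_length G \<le> marked_tour m \<phi> + word_length t"
    using word_length_splice[of us vs t] ws uv by (simp add: G_def t_def TSP_eq_word_length)
  moreover have "word_length (0, conf_shift 1 (marked_conf (m + n) \<phi>))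
      \<le> word_length G + lamp_cost + 2 * move_cost * nat (2 * R)"
  proof -
    let ?target = "conf_shift 1 (marked_conf (m + n) \<phi>)"
    have "wr_mult (p, \<alpha>) (q, \<beta>) = (0, conf_shift 1 (marked_conf m \<phi>))"
      using ws uv p q by (simp add: wr_prod_append)
    then have G_lamps: "snd G z = ?target z" if "z \<noteq> int m" for z
      using splice_lamps that uv(3) p q by (simp add: G_def t_def)
    have "fst G = 0" using ws uv p q by (simp add: G_def t_def wr_prod_append wr_mult_Pair)
    then have "(0, ?target) = (fst G, (snd G)(int m := ?target (int m)))"
      using G_lamps by (auto simp: fun_eq_iff)
    moreover have "G \<in> wr_carrier"
      using ws uv by (auto simp: G_def t_def intro!: wr_mult_closed wr_prod_closed)
    moreover have "snd G (int m + int n) \<noteq> 0"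
      using G_lamps[of "int m + int n"] False marker_lit[of "m + n" \<phi>] marker_nonzero by simp
    ultimately show ?thesis
      using word_length_set_lamp_before_lit[of G "int m + int n" "int m" "?target (int m)"] by simp
  qed
  ultimately show ?thesis by (simp add: TSP_eq_word_length)
qed simp

end

section \<open>Averages over configurations on a finite window\<close>

definition confs_on :: "int set \<Rightarrow> (int \<Rightarrow> 'f::zero) set" where
  "confs_on J = {\<phi>. \<forall>z. z \<notin> J \<longrightarrow> \<phi> z = 0}"

definition conf_mean :: "int set \<Rightarrow> ((int \<Rightarrow> 'f::{finite,zero}) \<Rightarrow> real) \<Rightarrow> real" where
  "conf_mean J g = (\<Sum>\<phi>\<in>confs_on J. g \<phi>) / card (confs_on J :: (int \<Rightarrow> 'f) set)"

lemma confs_on_empty: "confs_on {} = {\<lambda>_. 0}"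
  by (auto simp: confs_on_def)

lemma finite_confs_on: "finite J \<Longrightarrow> finite (confs_on J :: (int \<Rightarrow> 'f::{finite,zero}) set)"
  unfolding confs_on_def using finite_set_of_finite_funs[of J "UNIV :: 'f set" 0] by simp

lemma bij_betw_confs_on_insert:
  assumes "j \<notin> J"
  shows "bij_betw (\<lambda>(\<phi>, e). \<phi>(j := e)) (confs_on J \<times> (UNIV :: 'f::zero set)) (confs_on (insert j J))"
proof (rule bij_betwI[where g = "\<lambda>\<psi>. (\<psi>(j := 0), \<psi> j)"])
  show "(\<lambda>(\<phi>, e). \<phi>(j := e)) \<in> confs_on J \<times> UNIV \<rightarrow> confs_on (insert j J)"
    by (auto simp: confs_on_def)
  show "(\<lambda>\<psi>. (\<psi>(j := 0), \<psi> j)) \<in> confs_on (insert j J) \<rightarrow> confs_on J \<times> UNIV"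
    by (auto simp: confs_on_def)
  show "(\<lambda>\<psi>. (\<psi>(j := 0), \<psi> j)) ((\<lambda>(\<phi>, e). \<phi>(j := e)) x) = x" if "x \<in> confs_on J \<times> UNIV" for x
    using that assms by (auto simp: confs_on_def fun_eq_iff)
qed (auto simp: fun_eq_iff)

lemma sum_confs_on_insert:
  assumes "j \<notin> J"
  shows "(\<Sum>\<psi>\<in>confs_on (insert j J). g \<psi>) = (\<Sum>\<phi>\<in>confs_on J. \<Sum>e\<in>UNIV. g (\<phi>(j := e)))"
  using sum.reindex_bij_betw[OF bij_betw_confs_on_insert[OF assms], of g]
  by (simp add: sum.cartesian_product case_prod_unfold)

lemma card_confs_on:
  "finite J \<Longrightarrow> card (confs_on J :: (int \<Rightarrow> 'f::{finite,zero}) set) = CARD('f) ^ card J"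
proof (induction J rule: finite_induct)
  case (insert j J)
  then show ?case
    using bij_betw_same_card[OF bij_betw_confs_on_insert[where 'f = 'f, OF insert(2)]]
    by (simp add: card_cartesian_product mult.commute)
qed (simp add: confs_on_empty)

lemma conf_mean_insert:
  fixes g :: "(int \<Rightarrow> 'f::{finite,zero}) \<Rightarrow> real"
  assumes "finite J" "j \<notin> J"
  shows "conf_mean (insert j J) g = conf_mean J (\<lambda>\<phi>. (\<Sum>e\<in>UNIV. g (\<phi>(j := e))) / CARD('f))"
  using assms
  by (simp add: conf_mean_def sum_confs_on_insert card_confs_on sum_divide_distrib[symmetric]
      field_simps)

lemma sum_sq_dev_le:
  fixes a :: "'a::finite \<Rightarrow> real" and C :: real
  assumes "\<And>e e'. \<bar>a e - a e'\<bar> \<le> C"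
  shows "(\<Sum>e\<in>UNIV. (a e - m)\<^sup>2)
    \<le> real CARD('a) * C\<^sup>2 + real CARD('a) * ((\<Sum>e\<in>UNIV. a e) / CARD('a) - m)\<^sup>2"
proof -
  let ?N = "real CARD('a)"
  define h where "h = (\<Sum>e\<in>UNIV. a e) / CARD('a)"
  have N: "?N > 0" by simp
  have close: "(a e - h)\<^sup>2 \<le> C\<^sup>2" for e
  proof -
    have "a e - h = (\<Sum>e'\<in>UNIV. a e - a e') / ?N"
      using N by (simp add: h_def sum_subtractf field_simps)
    then have "\<bar>a e - h\<bar> \<le> (\<Sum>e'\<in>UNIV. \<bar>a e - a e'\<bar>) / ?N"
      using N by (simp add: divide_right_mono sum_abs)
    also have "\<dots> \<le> (\<Sum>e'\<in>(UNIV::'a set). C) / ?N"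
      using assms by (intro divide_right_mono sum_mono) auto
    finally have "\<bar>a e - h\<bar> \<le> \<bar>C\<bar>" using N by simp
    then show ?thesis by (simp add: abs_le_square_iff)
  qed
  have "(\<Sum>e\<in>UNIV. a e - h) = 0"
    using N by (simp add: h_def sum_subtractf)
  then have centred: "(\<Sum>e\<in>UNIV. 2 * (h - m) * (a e - h)) = 0"
    by (metis sum_distrib_left mult_zero_right)
  have "(\<Sum>e\<in>UNIV. (a e - m)\<^sup>2)
      = (\<Sum>e\<in>UNIV. (a e - h)\<^sup>2 + 2 * (h - m) * (a e - h) + (h - m)\<^sup>2)"
    by (rule sum.cong) (auto simp: power2_eq_square algebra_simps)
  also have "\<dots> = (\<Sum>e\<in>UNIV. (a e - h)\<^sup>2) + ?N * (h - m)\<^sup>2"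
    by (simp only: sum.distrib centred sum_constant add_0_right)
  also have "\<dots> \<le> ?N * C\<^sup>2 + ?N * (h - m)\<^sup>2"
    using sum_mono[of UNIV "\<lambda>e. (a e - h)\<^sup>2" "\<lambda>_. C\<^sup>2", OF close] by simp
  finally show ?thesis by (simp add: h_def)
qed

text \<open>The Efron--Stein inequality, proved by averaging out one lamp at a time.\<close>

lemma sum_sq_dev_conf_mean_le:
  fixes g :: "(int \<Rightarrow> 'f::{finite,zero}) \<Rightarrow> real" and C :: real
  assumes "finite J"
    and "\<And>\<phi> z e. \<phi> \<in> confs_on J \<Longrightarrow> z \<in> J \<Longrightarrow> \<bar>g (\<phi>(z := e)) - g \<phi>\<bar> \<le> C"
  shows "(\<Sum>\<phi>\<in>confs_on J. (g \<phi> - conf_mean J g)\<^sup>2)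
    \<le> real (card (confs_on J :: (int \<Rightarrow> 'f) set)) * real (card J) * C\<^sup>2"
  using assms
proof (induction J arbitrary: g rule: finite_induct)
  case empty
  then show ?case by (simp add: confs_on_empty conf_mean_def)
next
  case (insert j J)
  let ?N = "real CARD('f)" and ?M = "real (card (confs_on J :: (int \<Rightarrow> 'f) set))"
  define h where "h \<phi> = (\<Sum>e\<in>UNIV. g (\<phi>(j := e))) / ?N" for \<phi>
  have extend: "\<phi>(j := e) \<in> confs_on (insert j J)" if "\<phi> \<in> confs_on J" for \<phi> e
    using that by (auto simp: confs_on_def)
  have "\<bar>h (\<phi>(z := e)) - h \<phi>\<bar> \<le> C" if "\<phi> \<in> confs_on J" "z \<in> J" for \<phi> z e
  proof -
    have "z \<noteq> j" using that insert by auto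
    then have "h (\<phi>(z := e)) - h \<phi> = (\<Sum>e'\<in>UNIV. g ((\<phi>(j := e'))(z := e)) - g (\<phi>(j := e'))) / ?N"
      unfolding h_def by (simp add: sum_subtractf diff_divide_distrib fun_upd_twist)
    also have "\<bar>\<dots>\<bar> \<le> (\<Sum>e'\<in>UNIV. \<bar>g ((\<phi>(j := e'))(z := e)) - g (\<phi>(j := e'))\<bar>) / ?N"
      by (simp add: divide_right_mono sum_abs)
    also have "\<dots> \<le> (\<Sum>e'\<in>(UNIV::'f set). C) / ?N"
    proof (intro divide_right_mono sum_mono)
      show "\<bar>g ((\<phi>(j := e'))(z := e)) - g (\<phi>(j := e'))\<bar> \<le> C" for e'
        using insert.prems[of "\<phi>(j := e')" z e] extend[OF that(1), of e'] that(2) by blast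
    qed simp
    finally show ?thesis by simp
  qed
  then have IH: "(\<Sum>\<phi>\<in>confs_on J. (h \<phi> - conf_mean J h)\<^sup>2) \<le> ?M * card J * C\<^sup>2"
    by (rule insert.IH)
  have mean: "conf_mean (insert j J) g = conf_mean J h"
    unfolding h_def using insert.hyps by (rule conf_mean_insert)
  have "(\<Sum>e\<in>UNIV. (g (\<phi>(j := e)) - conf_mean J h)\<^sup>2) \<le> ?N * C\<^sup>2 + ?N * (h \<phi> - conf_mean J h)\<^sup>2"
    if "\<phi> \<in> confs_on J" for \<phi>
    unfolding h_def
    by (rule sum_sq_dev_le) (metis fun_upd_upd insert.prems extend[OF that] insertI1)
  then have "(\<Sum>\<psi>\<in>confs_on (insert j J). (g \<psi> - conf_mean (insert j J) g)\<^sup>2)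
      \<le> (\<Sum>\<phi>\<in>confs_on J. ?N * C\<^sup>2 + ?N * (h \<phi> - conf_mean J h)\<^sup>2)"
    using insert.hyps by (simp add: sum_confs_on_insert mean sum_mono)
  also have "\<dots> \<le> ?M * ?N * C\<^sup>2 + ?N * (?M * card J * C\<^sup>2)"
    using IH by (simp add: sum.distrib sum_distrib_left[symmetric])
  also have "\<dots> = real (card (confs_on (insert j J) :: (int \<Rightarrow> 'f) set)) * card (insert j J) * C\<^sup>2"
    using insert.hyps by (simp add: card_confs_on algebra_simps)
  finally show ?case .
qed

lemma card_abs_dev_ge_le:
  fixes g :: "'a \<Rightarrow> real"
  assumes "finite A" "t > 0"
  shows "real (card {x\<in>A. t \<le> \<bar>g x - c\<bar>}) * t\<^sup>2 \<le> (\<Sum>x\<in>A. (g x - c)\<^sup>2)"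
proof -
  have "real (card {x\<in>A. t \<le> \<bar>g x - c\<bar>}) * t\<^sup>2 = (\<Sum>x\<in>{x\<in>A. t \<le> \<bar>g x - c\<bar>}. t\<^sup>2)"
    by simp
  also have "\<dots> \<le> (\<Sum>x\<in>{x\<in>A. t \<le> \<bar>g x - c\<bar>}. (g x - c)\<^sup>2)"
    using assms(2) by (intro sum_mono) (simp add: abs_le_square_iff[symmetric])
  also have "\<dots> \<le> (\<Sum>x\<in>A. (g x - c)\<^sup>2)"
    using assms(1) by (intro sum_mono2) auto
  finally show ?thesis .
qed

abbreviation block_confs :: "nat \<Rightarrow> (int \<Rightarrow> 'f::zero) set" where
  "block_confs n \<equiv> confs_on {1..int n}"

lemma restr_conf_in_block_confs: "restr_conf \<omega> n \<in> block_confs n"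
  by (auto simp: restr_conf_def confs_on_def)

lemma card_block_confs: "card (block_confs n :: (int \<Rightarrow> 'f::{finite,zero}) set) = CARD('f) ^ n"
  by (simp add: card_confs_on)

definition conf_concat :: "nat \<Rightarrow> (int \<Rightarrow> 'f) \<Rightarrow> (int \<Rightarrow> 'f) \<Rightarrow> int \<Rightarrow> 'f" where
  "conf_concat m \<phi>\<^sub>1 \<phi>\<^sub>2 = (\<lambda>z. if z \<le> int m then \<phi>\<^sub>1 z else \<phi>\<^sub>2 (z - int m))"

lemma bij_betw_conf_concat:
  "bij_betw (\<lambda>(\<phi>\<^sub>1, \<phi>\<^sub>2). conf_concat m \<phi>\<^sub>1 \<phi>\<^sub>2) (block_confs m \<times> block_confs n)
    (block_confs (m + n) :: (int \<Rightarrow> 'f::group_add) set)"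
proof (rule bij_betwI[where g = "\<lambda>\<psi>. (restr_conf \<psi> m, restr_conf (conf_shift (int m) \<psi>) n)"])
  show "(\<lambda>(\<phi>\<^sub>1, \<phi>\<^sub>2). conf_concat m \<phi>\<^sub>1 \<phi>\<^sub>2) \<in> block_confs m \<times> block_confs n \<rightarrow> block_confs (m + n)"
    by (auto simp: confs_on_def conf_concat_def)
  show "(\<lambda>\<psi>. (restr_conf \<psi> m, restr_conf (conf_shift (int m) \<psi>) n))
      \<in> block_confs (m + n) \<rightarrow> block_confs m \<times> (block_confs n :: (int \<Rightarrow> 'f) set)"
    by (simp add: restr_conf_in_block_confs)
  show "(\<lambda>\<psi>. (restr_conf \<psi> m, restr_conf (conf_shift (int m) \<psi>) n))
      ((\<lambda>(\<phi>\<^sub>1, \<phi>\<^sub>2). conf_concat m \<phi>\<^sub>1 \<phi>\<^sub>2) x) = x"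
    if "x \<in> block_confs m \<times> block_confs n" for x :: "(int \<Rightarrow> 'f) \<times> (int \<Rightarrow> 'f)"
    using that
    by (auto simp: restr_conf_def conf_concat_def conf_shift_def confs_on_def fun_eq_iff split: prod.splits)
  show "(\<lambda>(\<phi>\<^sub>1, \<phi>\<^sub>2). conf_concat m \<phi>\<^sub>1 \<phi>\<^sub>2)
      ((\<lambda>\<psi>. (restr_conf \<psi> m, restr_conf (conf_shift (int m) \<psi>) n)) \<psi>) = \<psi>"
    if "\<psi> \<in> block_confs (m + n)" for \<psi> :: "int \<Rightarrow> 'f"
    using that by (auto simp: restr_conf_def conf_concat_def conf_shift_def confs_on_def fun_eq_iff)
qed

lemma sum_block_confs_add:
  "(\<Sum>\<psi>\<in>block_confs (m + n). F \<psi>)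
    = (\<Sum>\<phi>\<^sub>1\<in>block_confs m. \<Sum>\<phi>\<^sub>2\<in>block_confs n. F (conf_concat m \<phi>\<^sub>1 \<phi>\<^sub>2 :: int \<Rightarrow> 'f::group_add))"
  using sum.reindex_bij_betw[OF bij_betw_conf_concat, of F]
  by (simp add: sum.cartesian_product case_prod_unfold)

lemma conf_mean_block_left:
  fixes f :: "(int \<Rightarrow> 'f::{finite,group_add}) \<Rightarrow> real"
  assumes "\<And>\<phi>. f \<phi> = f (restr_conf \<phi> m)"
  shows "conf_mean {1..int (m + n)} f = conf_mean {1..int m} f"
proof -
  have "restr_conf (conf_concat m \<phi>\<^sub>1 \<phi>\<^sub>2) m = \<phi>\<^sub>1" if "\<phi>\<^sub>1 \<in> block_confs m" for \<phi>\<^sub>1 \<phi>\<^sub>2 :: "int \<Rightarrow> 'f"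
    using that by (auto simp: restr_conf_def conf_concat_def confs_on_def fun_eq_iff)
  then have "(\<Sum>\<psi>\<in>block_confs (m + n). f \<psi>)
      = (\<Sum>\<phi>\<^sub>1\<in>block_confs m. \<Sum>\<phi>\<^sub>2\<in>(block_confs n :: (int \<Rightarrow> 'f) set). f \<phi>\<^sub>1)"
    unfolding sum_block_confs_add by (intro sum.cong refl) (metis assms)
  then show ?thesis
    unfolding conf_mean_def
    by (simp add: card_block_confs sum_distrib_left[symmetric] power_add del: of_nat_add)
qed

lemma conf_mean_block_right:
  fixes f :: "(int \<Rightarrow> 'f::{finite,group_add}) \<Rightarrow> real"
  assumes "\<And>\<phi>. f \<phi> = f (restr_conf \<phi> n)"
  shows "conf_mean {1..int (m + n)} (\<lambda>\<phi>. f (conf_shift (int m) \<phi>)) = conf_mean {1..int n} f"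
proof -
  have "restr_conf (conf_shift (int m) (conf_concat m \<phi>\<^sub>1 \<phi>\<^sub>2)) n = \<phi>\<^sub>2"
    if "\<phi>\<^sub>2 \<in> block_confs n" for \<phi>\<^sub>1 \<phi>\<^sub>2 :: "int \<Rightarrow> 'f"
    using that by (auto simp: restr_conf_def conf_concat_def conf_shift_def confs_on_def fun_eq_iff)
  then have "(\<Sum>\<psi>\<in>block_confs (m + n). f (conf_shift (int m) \<psi>))
      = (\<Sum>\<phi>\<^sub>1\<in>(block_confs m :: (int \<Rightarrow> 'f) set). \<Sum>\<phi>\<^sub>2\<in>block_confs n. f \<phi>\<^sub>2)"
    unfolding sum_block_confs_add by (intro sum.cong refl) (metis assms)
  then show ?thesis
    unfolding conf_mean_def by (simp add: card_block_confs power_add del: of_nat_add)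
qed

lemma conf_mean_add: "conf_mean J (\<lambda>\<phi>. f \<phi> + g \<phi>) = conf_mean J f + conf_mean J g"
  by (simp add: conf_mean_def sum.distrib add_divide_distrib)

lemma conf_mean_const: "finite J \<Longrightarrow> conf_mean J (\<lambda>_. c) = c"
  by (simp add: conf_mean_def card_confs_on)

lemma conf_mean_mono:
  "(\<And>\<phi>. \<phi> \<in> confs_on J \<Longrightarrow> f \<phi> \<le> g \<phi>) \<Longrightarrow> conf_mean J f \<le> conf_mean J g"
  unfolding conf_mean_def by (intro divide_right_mono sum_mono) auto

lemma product_prob_space_unif:
  "product_prob_space (\<lambda>_::int. measure_pmf (pmf_of_set (UNIV :: 'f::finite set)))"
  by (rule product_prob_spaceI) (rule prob_space_measure_pmf)

lemma prob_space_unif_conf: "prob_space (unif_conf_measure :: (int \<Rightarrow> 'f::{finite,group_add}) measure)"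
proof -
  interpret product_prob_space "\<lambda>_::int. measure_pmf (pmf_of_set (UNIV :: 'f set))" UNIV
    by (rule product_prob_space_unif)
  show ?thesis unfolding unif_conf_measure_def by (rule P.prob_space_axioms)
qed

lemma space_unif_conf [simp]: "space (unif_conf_measure :: (int \<Rightarrow> 'f::{finite,group_add}) measure) = UNIV"
  by (simp add: unif_conf_measure_def space_PiM PiE_UNIV_domain)

lemma
  fixes \<phi> :: "int \<Rightarrow> 'f::{finite,group_add}"
  assumes "finite J"
  shows sets_unif_conf_cylinder: "{\<omega>. \<forall>z\<in>J. \<omega> z = \<phi> z} \<in> sets unif_conf_measure"
    and measure_unif_conf_cylinder:
      "measure unif_conf_measure {\<omega>. \<forall>z\<in>J. \<omega> z = \<phi> z} = (1 / real CARD('f)) ^ card J"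
proof -
  let ?M = "\<lambda>_::int. measure_pmf (pmf_of_set (UNIV :: 'f set))"
  interpret product_prob_space ?M UNIV
    by (rule product_prob_space_unif)
  have cyl: "{\<omega>. \<forall>z\<in>J. \<omega> z = \<phi> z} = prod_emb UNIV ?M J (\<Pi>\<^sub>E z\<in>J. {\<phi> z})"
    by (auto simp: prod_emb_iff PiE_iff)
  show "{\<omega>. \<forall>z\<in>J. \<omega> z = \<phi> z} \<in> sets unif_conf_measure"
    unfolding cyl unif_conf_measure_def using assms by (intro sets_PiM_I) auto
  have "emeasure (Pi\<^sub>M UNIV ?M) (prod_emb UNIV ?M J (\<Pi>\<^sub>E z\<in>J. {\<phi> z}))
      = (\<Prod>z\<in>J. emeasure (?M z) {\<phi> z})"
    using assms by (intro emeasure_PiM_emb) auto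
  also have "\<dots> = ennreal ((1 / real CARD('f)) ^ card J)"
    by (simp add: emeasure_pmf_single ennreal_power)
  finally show "measure unif_conf_measure {\<omega>. \<forall>z\<in>J. \<omega> z = \<phi> z} = (1 / real CARD('f)) ^ card J"
    by (simp add: cyl unif_conf_measure_def measure_def)
qed

lemma
  fixes B :: "(int \<Rightarrow> 'f::{finite,group_add}) set"
  assumes "B \<subseteq> block_confs n"
  shows sets_unif_conf_block_event: "{\<omega>. restr_conf \<omega> n \<in> B} \<in> sets unif_conf_measure"
    and measure_unif_conf_block_event:
      "measure unif_conf_measure {\<omega>. restr_conf \<omega> n \<in> B} = card B / card (block_confs n :: (int \<Rightarrow> 'f) set)"
proof -
  let ?A = "\<lambda>\<phi>. {\<omega>. \<forall>z\<in>{1..int n}. \<omega> z = \<phi> z}"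
  have "finite B" using assms finite_confs_on[of "{1..int n}"] finite_subset by blast
  have event: "{\<omega>. restr_conf \<omega> n \<in> B} = (\<Union>\<phi>\<in>B. ?A \<phi>)"
  proof -
    have "restr_conf \<omega> n = \<phi> \<longleftrightarrow> (\<forall>z\<in>{1..int n}. \<omega> z = \<phi> z)" if "\<phi> \<in> B" for \<omega> \<phi>
      using that assms by (auto simp: restr_conf_def confs_on_def fun_eq_iff)
    then show ?thesis by (auto, metis)
  qed
  have sets: "?A ` B \<subseteq> sets unif_conf_measure" using sets_unif_conf_cylinder by blast
  then show "{\<omega>. restr_conf \<omega> n \<in> B} \<in> sets unif_conf_measure"
    unfolding event using \<open>finite B\<close> by blast
  have "disjoint_family_on ?A B"
    unfolding disjoint_family_on_def
  proof (intro ballI impI)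
    fix \<phi> \<phi>' assume "\<phi> \<in> B" "\<phi>' \<in> B" "\<phi> \<noteq> \<phi>'"
    then obtain z where z: "\<phi> z \<noteq> \<phi>' z" by (auto simp: fun_eq_iff)
    moreover have "z \<in> {1..int n}"
    proof (rule ccontr)
      assume "z \<notin> {1..int n}"
      then have "\<phi> z = 0" "\<phi>' z = 0"
        using \<open>\<phi> \<in> B\<close> \<open>\<phi>' \<in> B\<close> assms by (auto simp: confs_on_def)
      with z show False by simp
    qed
    ultimately show "?A \<phi> \<inter> ?A \<phi>' = {}" by auto
  qed
  then have "measure unif_conf_measure {\<omega>. restr_conf \<omega> n \<in> B}
      = (\<Sum>\<phi>\<in>B. measure unif_conf_measure (?A \<phi>))"
    unfolding event using \<open>finite B\<close> sets
    by (intro measure_finite_Union) (auto simp: finite_measure.emeasure_finite[OF prob_space.axioms(1)[OF prob_space_unif_conf]])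
  also have "\<dots> = card B / card (block_confs n :: (int \<Rightarrow> 'f) set)"
    by (simp add: measure_unif_conf_cylinder card_block_confs power_one_over)
  finally show "measure unif_conf_measure {\<omega>. restr_conf \<omega> n \<in> B}
      = card B / card (block_confs n :: (int \<Rightarrow> 'f) set)" .
qed

lemma AE_eventually_notin_unif_conf:
  fixes A :: "nat \<Rightarrow> (int \<Rightarrow> 'f::{finite,group_add}) set"
  assumes "\<And>n. A n \<in> sets unif_conf_measure"
    and "summable (\<lambda>n. measure unif_conf_measure (A n))"
  shows "AE \<omega> in unif_conf_measure. eventually (\<lambda>n. \<omega> \<notin> A n) sequentially"
proof -
  interpret prob_space "unif_conf_measure :: (int \<Rightarrow> 'f) measure"
    by (rule prob_space_unif_conf)
  have "AE \<omega> in unif_conf_measure. eventually (\<lambda>n. \<omega> \<in> space unif_conf_measure - A n) sequentially"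
    using assms by (intro borel_cantelli_AE1) (simp_all add: emeasure_eq_measure)
  then show ?thesis by simp
qed

section \<open>Subadditive sequences\<close>

lemma subadditive_iterate:
  fixes b :: "nat \<Rightarrow> real"
  assumes "\<And>m n. b (m + n) \<le> b m + b n"
  shows "b (q * m + r) \<le> real q * b m + b r"
proof (induction q)
  case (Suc q)
  have "b (Suc q * m + r) \<le> b m + b (q * m + r)"
    using assms[of m "q * m + r"] by (simp add: add.assoc)
  then show ?case using Suc by (simp add: algebra_simps)
qed simp

lemma subadditive_quotient_le:
  fixes b :: "nat \<Rightarrow> real"
  assumes "\<And>m n. b (m + n) \<le> b m + b n" "\<And>n. 0 \<le> b n" "0 < m" "0 < n"
  shows "b n / n \<le> b m / m + Max (b ` {..<m}) / n"
proof -
  have "b n \<le> real (n div m) * b m + b (n mod m)"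
    using subadditive_iterate[of b "n div m" m "n mod m", OF assms(1)] by simp
  also have "\<dots> \<le> real (n div m) * b m + Max (b ` {..<m})"
    using assms(3) by (intro add_left_mono Max_ge) auto
  also have "real (n div m) * b m \<le> real n * (b m / m)"
  proof -
    have "real (n div m) * real m \<le> real n"
      by (metis div_times_less_eq_dividend of_nat_le_iff of_nat_mult)
    then show ?thesis
      using assms(2,3) mult_right_mono[of "real (n div m) * real m" "real n" "b m / m"] by simp
  qed
  finally show ?thesis using assms(4) by (simp add: field_simps)
qed

theorem fekete_lemma:
  fixes b :: "nat \<Rightarrow> real"
  assumes "\<And>m n. b (m + n) \<le> b m + b n" "\<And>n. 0 \<le> b n"
  shows "\<exists>L. (\<lambda>n. b n / n) \<longlonglongrightarrow> L"
proof
  let ?Q = "(\<lambda>n. b n / n) ` {0<..}"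
  have bdd: "bdd_below ?Q" using assms(2) by (intro bdd_belowI[of _ 0]) auto
  show "(\<lambda>n. b n / n) \<longlonglongrightarrow> Inf ?Q"
  proof (rule tendstoI)
    fix r :: real assume "r > 0"
    then obtain m where m: "0 < m" "b m / m < Inf ?Q + r / 2"
      using cInf_less_iff[OF _ bdd, of "Inf ?Q + r / 2"] by auto
    have "eventually (\<lambda>n. Max (b ` {..<m}) / real n < r / 2) sequentially"
      using order_tendstoD(2)[OF lim_const_over_n, of "r / 2"] \<open>r > 0\<close> by simp
    then show "eventually (\<lambda>n. dist (b n / n) (Inf ?Q) < r) sequentially"
      using eventually_gt_at_top[of 0]
    proof eventually_elim
      case (elim n)
      have "Inf ?Q \<le> b n / n" using elim bdd by (intro cInf_lower) auto
      moreover have "b n / n \<le> b m / m + Max (b ` {..<m}) / n"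
        using subadditive_quotient_le[OF assms m(1) elim(2)] .
      ultimately have "\<bar>b n / n - Inf ?Q\<bar> < r" using elim(1) m(2) by linarith
      then show ?case by (simp add: dist_real_def)
    qed
  qed
qed

lemma LIMSEQ_quotient_ge:
  fixes f :: "nat \<Rightarrow> real"
  assumes "(\<lambda>n. f n / n) \<longlonglongrightarrow> c" "\<And>n. real n - a \<le> b * f n" "b > 0"
  shows "1 / b \<le> c"
proof -
  have "(\<lambda>n. 1 / b - a / b * inverse (real n)) \<longlonglongrightarrow> 1 / b - a / b * 0"
    by (intro tendsto_intros lim_inverse_n)
  moreover have "eventually (\<lambda>n. 1 / b - a / b * inverse (real n) \<le> f n / n) sequentially"
    using eventually_gt_at_top[of 0]
  proof eventually_elim
    case (elim n)
    then have "1 / b - a / b * inverse (real n) = (real n - a) / b / n"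
      using assms(3) by (simp add: field_simps)
    also have "\<dots> \<le> f n / n"
      using assms(2)[of n] assms(3) by (intro divide_right_mono) (simp_all add: pos_divide_le_eq mult.commute)
    finally show ?case .
  qed
  ultimately show ?thesis using tendsto_le[OF trivial_limit_sequentially assms(1)] by simp
qed

lemma LIMSEQ_zero_if_eventually_small:
  fixes d :: "nat \<Rightarrow> real"
  assumes "\<And>j::nat. eventually (\<lambda>k. \<bar>d k\<bar> < 1 / (real j + 1)) sequentially"
  shows "d \<longlonglongrightarrow> 0"
proof (rule tendstoI)
  fix r :: real assume "r > 0"
  then obtain j :: nat where "inverse (real (Suc j)) < r" using reals_Archimedean by blast
  then have j: "1 / (real j + 1) < r" by (simp add: inverse_eq_divide add.commute)
  show "eventually (\<lambda>k. dist (d k) 0 < r) sequentially"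
    using assms[of j] by eventually_elim (use j in simp)
qed

lemma filterlim_floor_sqrt: "filterlim floor_sqrt at_top sequentially"
  unfolding filterlim_at_top
  by (auto intro: eventually_mono[OF eventually_ge_at_top] le_floor_sqrtI)

lemma floor_sqrt_quotient_tendsto: "(\<lambda>n. real (floor_sqrt n) / n) \<longlonglongrightarrow> 0"
proof (rule Lim_null_comparison)
  show "(\<lambda>n. 1 / sqrt (real n)) \<longlonglongrightarrow> 0" by real_asymp
  show "eventually (\<lambda>n. norm (real (floor_sqrt n) / n) \<le> 1 / sqrt n) sequentially"
    using eventually_gt_at_top[of 0]
  proof eventually_elim
    case (elim n)
    have "real (floor_sqrt n) \<le> sqrt n"
      using floor_sqrt_power2_le[of n] by (intro real_le_rsqrt) (metis of_nat_le_iff of_nat_power)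
    then have "real (floor_sqrt n) / n \<le> sqrt n / n"
      by (simp add: divide_right_mono)
    also have "\<dots> = 1 / sqrt n"
      using elim by (simp add: field_simps)
    finally show ?case by simp
  qed
qed

text \<open>\<open>n\<close> lies within \<open>2 \<surd>n\<close> of the largest square below it.\<close>

lemma LIMSEQ_from_squares:
  fixes a :: "nat \<Rightarrow> real"
  assumes step: "\<And>n. \<bar>a (Suc n) - a n\<bar> \<le> C"
    and squares: "(\<lambda>k. a (k\<^sup>2) / k\<^sup>2) \<longlonglongrightarrow> c"
  shows "(\<lambda>n. a n / n) \<longlonglongrightarrow> c"
proof -
  define s where "s n = (floor_sqrt n)\<^sup>2" for n
  have s_le: "s n \<le> n" for n
    by (simp add: s_def)
  have gap: "n - s n \<le> 2 * floor_sqrt n" for n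
    using Suc_floor_sqrt_power2_gt[of n] by (simp add: s_def power2_eq_square)
  have drift: "\<bar>a (i + d) - a i\<bar> \<le> C * d" for i d
  proof (induction d)
    case (Suc d)
    then show ?case using step[of "i + d"] by (simp add: algebra_simps)
  qed simp
  have along: "(\<lambda>n. a (s n) / s n) \<longlonglongrightarrow> c"
    using filterlim_compose[OF squares filterlim_floor_sqrt] by (simp add: s_def o_def)
  have ratio: "(\<lambda>n. real (s n) / n - 1) \<longlonglongrightarrow> 0"
  proof (rule Lim_null_comparison[OF _ tendsto_mult_right_zero[OF floor_sqrt_quotient_tendsto, of 2]])
    show "eventually (\<lambda>n. norm (real (s n) / n - 1) \<le> 2 * (real (floor_sqrt n) / n)) sequentially"
      using eventually_gt_at_top[of 0]
    proof eventually_elim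
      case (elim n)
      have "real (s n) / n - 1 = - (real (n - s n) / n)"
        using elim s_le[of n] by (simp add: of_nat_diff field_simps)
      moreover have "real (n - s n) / n \<le> 2 * (real (floor_sqrt n) / n)"
        using gap[of n] by (simp add: divide_right_mono)
      ultimately show ?case by simp
    qed
  qed
  have rest: "(\<lambda>n. (a n - a (s n)) / n) \<longlonglongrightarrow> 0"
  proof (rule Lim_null_comparison[OF _ tendsto_mult_right_zero[OF floor_sqrt_quotient_tendsto, of "2 * C"]])
    show "eventually (\<lambda>n. norm ((a n - a (s n)) / n) \<le> 2 * C * (real (floor_sqrt n) / n)) sequentially"
      using eventually_gt_at_top[of 0]
    proof eventually_elim
      case (elim n)
      have "\<bar>a n - a (s n)\<bar> \<le> C * (n - s n)"
        using drift[of "s n" "n - s n"] s_le[of n] by simp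
      also have "\<dots> \<le> C * (2 * floor_sqrt n)"
        using gap[of n] step[of 0] by (intro mult_left_mono) linarith+
      finally show ?case using elim by (simp add: abs_divide divide_right_mono)
    qed
  qed
  have "(\<lambda>n. a (s n) / s n * (real (s n) / n - 1 + 1) + (a n - a (s n)) / n) \<longlonglongrightarrow> c * (0 + 1) + 0"
    by (intro tendsto_intros along ratio rest)
  moreover have "eventually (\<lambda>n. a (s n) / s n * (real (s n) / n - 1 + 1) + (a n - a (s n)) / n
      = a n / n) sequentially"
    using eventually_gt_at_top[of 0]
  proof eventually_elim
    case (elim n)
    then have "s n \<noteq> 0" by (simp add: s_def)
    then show ?case using elim by (simp add: field_simps)
  qed
  ultimately show ?thesis by (simp add: tendsto_cong)
qed

section \<open>Almost sure limits of subadditive functionals\<close>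

locale subadditive_conf_functional =
  fixes X :: "nat \<Rightarrow> (int \<Rightarrow> 'f::{finite,group_add}) \<Rightarrow> real" and C :: real
  assumes X_restr_conf: "\<And>n \<phi>. X n (restr_conf \<phi> n) = X n \<phi>"
    and X_set_lamp_le: "\<And>n \<phi> z e. z \<in> {1..int n} \<Longrightarrow> X n (\<phi>(z := e)) \<le> X n \<phi> + C"
    and X_Suc_le: "\<And>n \<phi>. X (Suc n) \<phi> \<le> X n \<phi> + C"
    and X_le_Suc: "\<And>n \<phi>. X n \<phi> \<le> X (Suc n) \<phi> + C"
    and X_add_le: "\<And>m n \<phi>. X (m + n) \<phi> \<le> X m \<phi> + X n (conf_shift (int m) \<phi>) + C"
    and X_nonneg: "\<And>n \<phi>. 0 \<le> X n \<phi>"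
begin

lemma C_nonneg: "0 \<le> C"
  using X_Suc_le[of 0 "\<lambda>_. 0"] X_le_Suc[of 0 "\<lambda>_. 0"] by linarith

lemma abs_X_set_lamp_le: "z \<in> {1..int n} \<Longrightarrow> \<bar>X n (\<phi>(z := e)) - X n \<phi>\<bar> \<le> C"
  using X_set_lamp_le[of z n \<phi> e] X_set_lamp_le[of z n "\<phi>(z := e)" "\<phi> z"] by simp

definition mean :: "nat \<Rightarrow> real" where
  "mean n = conf_mean {1..int n} (X n)"

lemma mean_add_le: "mean (m + n) \<le> mean m + mean n + C"
proof -
  have "mean (m + n) \<le> conf_mean {1..int (m + n)} (\<lambda>\<phi>. X m \<phi> + X n (conf_shift (int m) \<phi>) + C)"
    unfolding mean_def by (rule conf_mean_mono) (rule X_add_le)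
  also have "\<dots> = conf_mean {1..int (m + n)} (X m)
      + conf_mean {1..int (m + n)} (\<lambda>\<phi>. X n (conf_shift (int m) \<phi>)) + C"
    by (simp add: conf_mean_add conf_mean_const del: of_nat_add)
  also have "conf_mean {1..int (m + n)} (X m) = mean m"
    unfolding mean_def by (rule conf_mean_block_left) (simp add: X_restr_conf)
  also have "conf_mean {1..int (m + n)} (\<lambda>\<phi>. X n (conf_shift (int m) \<phi>)) = mean n"
    unfolding mean_def by (rule conf_mean_block_right) (simp add: X_restr_conf)
  finally show ?thesis .
qed

lemma mean_limit: obtains L where "(\<lambda>n. mean n / n) \<longlonglongrightarrow> L"
proof -
  have "0 \<le> mean n" for n
    unfolding mean_def using conf_mean_mono[of "{1..int n}" "\<lambda>_. 0" "X n"]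
    by (simp add: X_nonneg conf_mean_const)
  then obtain L where "(\<lambda>n. (mean n + C) / n) \<longlonglongrightarrow> L"
    using fekete_lemma[of "\<lambda>n. mean n + C"] mean_add_le C_nonneg by (fastforce simp: algebra_simps)
  then have "(\<lambda>n. (mean n + C) / n - C / n) \<longlonglongrightarrow> L - 0"
    by (intro tendsto_intros)
  moreover have "(\<lambda>n. (mean n + C) / n - C / n) = (\<lambda>n. mean n / n)"
    by (simp add: fun_eq_iff add_divide_distrib)
  ultimately show thesis using that by simp
qed

lemma deviation_event:
  "{\<omega>. t \<le> \<bar>X n \<omega> - mean n\<bar>} = {\<omega>. restr_conf \<omega> n \<in> {\<phi> \<in> block_confs n. t \<le> \<bar>X n \<phi> - mean n\<bar>}}"
  using restr_conf_in_block_confs by (auto simp: X_restr_conf)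

lemma sets_deviation_event: "{\<omega>. t \<le> \<bar>X n \<omega> - mean n\<bar>} \<in> sets unif_conf_measure"
  unfolding deviation_event by (rule sets_unif_conf_block_event) auto

lemma prob_deviation_le:
  assumes "t > 0"
  shows "measure unif_conf_measure {\<omega>. t \<le> \<bar>X n \<omega> - mean n\<bar>} \<le> n * C\<^sup>2 / t\<^sup>2"
proof -
  let ?B = "{\<phi> \<in> block_confs n. t \<le> \<bar>X n \<phi> - mean n\<bar>}"
  let ?N = "real (card (block_confs n :: (int \<Rightarrow> 'f) set))"
  have "real (card ?B) * t\<^sup>2 \<le> (\<Sum>\<phi>\<in>block_confs n. (X n \<phi> - mean n)\<^sup>2)"
    using assms by (intro card_abs_dev_ge_le) (simp_all add: finite_confs_on)
  also have "\<dots> \<le> ?N * n * C\<^sup>2"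
    unfolding mean_def
    using sum_sq_dev_conf_mean_le[of "{1..int n}" "X n" C] abs_X_set_lamp_le by simp
  finally have "card ?B / ?N \<le> n * C\<^sup>2 / t\<^sup>2"
    using assms by (simp add: card_block_confs field_simps)
  then show ?thesis
    unfolding deviation_event by (subst measure_unif_conf_block_event) auto
qed

lemma AE_eventually_deviation_squares:
  assumes "\<epsilon> > 0"
  shows "AE \<omega> in unif_conf_measure.
    eventually (\<lambda>k. \<bar>(X (k\<^sup>2) \<omega> - mean (k\<^sup>2)) / k\<^sup>2\<bar> < \<epsilon>) sequentially"
proof -
  define A where "A k = {\<omega>. \<epsilon> * k\<^sup>2 \<le> \<bar>X (k\<^sup>2) \<omega> - mean (k\<^sup>2)\<bar>}" for k :: nat
  have bound: "measure unif_conf_measure (A k) \<le> C\<^sup>2 / \<epsilon>\<^sup>2 * inverse (real k ^ 2)" if "k \<ge> 1" for k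
  proof -
    have "measure unif_conf_measure (A k) \<le> real (k\<^sup>2) * C\<^sup>2 / (\<epsilon> * k\<^sup>2)\<^sup>2"
      unfolding A_def using that assms by (intro prob_deviation_le) simp
    also have "\<dots> = C\<^sup>2 / \<epsilon>\<^sup>2 * inverse (real k ^ 2)"
      using that assms by (simp add: field_simps power2_eq_square)
    finally show ?thesis .
  qed
  have "summable (\<lambda>k. measure unif_conf_measure (A k))"
  proof (rule summable_comparison_test')
    show "summable (\<lambda>k. C\<^sup>2 / \<epsilon>\<^sup>2 * inverse (real k ^ 2))"
      by (intro summable_mult inverse_power_summable) simp
    show "norm (measure unif_conf_measure (A k)) \<le> C\<^sup>2 / \<epsilon>\<^sup>2 * inverse (real k ^ 2)" if "k \<ge> 1" for k
      using bound[OF that] by simp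
  qed
  then have "AE \<omega> in unif_conf_measure. eventually (\<lambda>k. \<omega> \<notin> A k) sequentially"
    by (intro AE_eventually_notin_unif_conf) (simp_all add: A_def sets_deviation_event)
  then show ?thesis
  proof (rule eventually_mono)
    fix \<omega> assume "eventually (\<lambda>k. \<omega> \<notin> A k) sequentially"
    then show "eventually (\<lambda>k. \<bar>(X (k\<^sup>2) \<omega> - mean (k\<^sup>2)) / k\<^sup>2\<bar> < \<epsilon>) sequentially"
      using eventually_gt_at_top[of 0]
      by eventually_elim (simp add: A_def abs_divide field_simps)
  qed
qed

text \<open>By Chebyshev's inequality and the Efron--Stein bound, a deviation of size \<open>\<epsilon> n\<close> has
  probability \<open>O(1 / (\<epsilon>\<^sup>2 n))\<close>, which is summable along the squares; the bounded
  increments fill the gaps.\<close>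

theorem AE_limit: "\<exists>c. AE \<omega> in unif_conf_measure. (\<lambda>n. X n \<omega> / n) \<longlonglongrightarrow> c"
proof -
  obtain L where L: "(\<lambda>n. mean n / n) \<longlonglongrightarrow> L" by (rule mean_limit)
  have "AE \<omega> in unif_conf_measure. \<forall>j::nat.
      eventually (\<lambda>k. \<bar>(X (k\<^sup>2) \<omega> - mean (k\<^sup>2)) / k\<^sup>2\<bar> < 1 / (real j + 1)) sequentially"
    by (subst AE_all_countable) (intro allI AE_eventually_deviation_squares, simp)
  then have "AE \<omega> in unif_conf_measure. (\<lambda>n. X n \<omega> / n) \<longlonglongrightarrow> L"
  proof (rule eventually_mono)
    fix \<omega> assume "\<forall>j::nat. eventually (\<lambda>k. \<bar>(X (k\<^sup>2) \<omega> - mean (k\<^sup>2)) / k\<^sup>2\<bar> < 1 / (real j + 1)) sequentially"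
    then have "(\<lambda>k. (X (k\<^sup>2) \<omega> - mean (k\<^sup>2)) / k\<^sup>2) \<longlonglongrightarrow> 0"
      by (intro LIMSEQ_zero_if_eventually_small) simp
    moreover have "(\<lambda>k. mean (k\<^sup>2) / k\<^sup>2) \<longlonglongrightarrow> L"
      using filterlim_compose[OF L filterlim_subseq[of "\<lambda>k. k\<^sup>2"]]
      by (simp add: o_def strict_mono_def power_strict_mono)
    ultimately have "(\<lambda>k. (X (k\<^sup>2) \<omega> - mean (k\<^sup>2)) / k\<^sup>2 + mean (k\<^sup>2) / k\<^sup>2) \<longlonglongrightarrow> 0 + L"
      by (intro tendsto_intros)
    then have "(\<lambda>k. X (k\<^sup>2) \<omega> / k\<^sup>2) \<longlonglongrightarrow> L"
      by (simp add: diff_divide_distrib)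
    moreover have "\<bar>X (Suc n) \<omega> - X n \<omega>\<bar> \<le> C" for n
      using X_Suc_le[of n \<omega>] X_le_Suc[of n \<omega>] by simp
    ultimately show "(\<lambda>n. X n \<omega> / n) \<longlonglongrightarrow> L"
      by (intro LIMSEQ_from_squares)
  qed
  then show ?thesis ..
qed

end

section \<open>The last lit lamp\<close>

lemma floor_log_quotient_tendsto: "(\<lambda>n. real (floor_log n) / n) \<longlonglongrightarrow> 0"
proof (rule Lim_null_comparison)
  show "(\<lambda>n. log 2 n / n) \<longlonglongrightarrow> 0" by real_asymp
  show "eventually (\<lambda>n. norm (real (floor_log n) / n) \<le> log 2 n / n) sequentially"
    using eventually_gt_at_top[of 0]
  proof eventually_elim
    case (elim n)
    then have "real (floor_log n) \<le> log 2 n"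
      by (simp add: floor_log_altdef)
    then show ?case by (simp add: divide_right_mono)
  qed
qed

lemma measure_last_lamps_off_le:
  assumes "CARD('f::{finite,group_add}) \<ge> 2" "n \<ge> 1"
  shows "measure (unif_conf_measure :: (int \<Rightarrow> 'f) measure)
    {\<omega>. \<forall>z\<in>{int n - int (2 * Suc (floor_log n)) + 1..int n}. \<omega> z = 0} \<le> inverse (real n ^ 2)"
proof -
  define k where "k = 2 * Suc (floor_log n)"
  have "measure (unif_conf_measure :: (int \<Rightarrow> 'f) measure)
      {\<omega>. \<forall>z\<in>{int n - int k + 1..int n}. \<omega> z = 0} = (1 / real CARD('f)) ^ k"
    using measure_unif_conf_cylinder[of "{int n - int k + 1..int n}" "\<lambda>_. 0 :: 'f"] by simp
  also have "\<dots> \<le> (1 / 2) ^ k"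
    using assms(1) by (intro power_mono) (simp_all add: field_simps)
  also have "\<dots> = inverse (real (2 * 2 ^ floor_log n) ^ 2)"
    by (simp add: k_def power_one_over inverse_eq_divide flip: power_mult)
  also have "\<dots> \<le> inverse (real n ^ 2)"
    using floor_log_exp2_gt[of n] assms(2)
    by (intro le_imp_inverse_le power_mono) (simp_all flip: of_nat_mult of_nat_power)
  finally show ?thesis unfolding k_def .
qed

text \<open>By Borel--Cantelli, eventually one of the last \<open>2 (floor_log n + 1)\<close> lamps is lit.\<close>

lemma AE_last_lamp_gap:
  assumes "CARD('f::{finite,group_add}) \<ge> 2"
  shows "AE \<omega> in (unif_conf_measure :: (int \<Rightarrow> 'f) measure).
    (\<lambda>n. real_of_int (int n - last_lamp n \<omega>) / n) \<longlonglongrightarrow> 0"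
proof -
  define k where "k n = 2 * Suc (floor_log n)" for n
  define E where "E n = {\<omega> :: int \<Rightarrow> 'f. \<forall>z\<in>{int n - int (k n) + 1..int n}. \<omega> z = 0}" for n
  have k_tendsto: "(\<lambda>n. real (k n) / n) \<longlonglongrightarrow> 0"
    using tendsto_add[OF tendsto_mult_right_zero[OF floor_log_quotient_tendsto, of 2] lim_const_over_n[of 2]]
    by (simp add: k_def add_divide_distrib add.commute)
  have prob: "measure unif_conf_measure (E n) \<le> inverse (real n ^ 2)" if "n \<ge> 1" for n
    unfolding E_def k_def by (rule measure_last_lamps_off_le[OF assms that])
  have "summable (\<lambda>n. measure unif_conf_measure (E n))"
  proof (rule summable_comparison_test')
    show "summable (\<lambda>n. inverse (real n ^ 2))" by (rule inverse_power_summable) simp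
    show "norm (measure unif_conf_measure (E n)) \<le> inverse (real n ^ 2)" if "n \<ge> 1" for n
      using prob[OF that] by simp
  qed
  then have "AE \<omega> in unif_conf_measure. eventually (\<lambda>n. \<omega> \<notin> E n) sequentially"
    by (intro AE_eventually_notin_unif_conf) (simp_all add: E_def sets_unif_conf_cylinder)
  then show ?thesis
  proof (rule eventually_mono)
    fix \<omega> :: "int \<Rightarrow> 'f" assume "eventually (\<lambda>n. \<omega> \<notin> E n) sequentially"
    moreover have "eventually (\<lambda>n. real (k n) / n < 1) sequentially"
      using order_tendstoD(2)[OF k_tendsto] by simp
    ultimately have "eventually (\<lambda>n. norm (real_of_int (int n - last_lamp n \<omega>) / n) \<le> real (k n) / n)
        sequentially"
      using eventually_gt_at_top[of 0]
    proof eventually_elim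
      case (elim n)
      then obtain z where z: "z \<in> {int n - int (k n) + 1..int n}" "\<omega> z \<noteq> 0"
        by (auto simp: E_def)
      moreover have "k n < n" using elim by simp
      ultimately have "z \<le> last_lamp n \<omega>" by (intro last_lamp_ge) auto
      then have "\<bar>int n - last_lamp n \<omega>\<bar> \<le> int (k n)"
        using z last_lamp_le[of n \<omega>] by auto
      then have "\<bar>real_of_int (int n - last_lamp n \<omega>)\<bar> \<le> real (k n)"
        by (metis of_int_abs of_int_le_iff of_int_of_nat_eq)
      then show ?case by (simp add: abs_divide divide_right_mono)
    qed
    then show "(\<lambda>n. real_of_int (int n - last_lamp n \<omega>) / n) \<longlonglongrightarrow> 0"
      by (rule Lim_null_comparison) (rule k_tendsto)
  qed
qed

context subadditive_conf_functional
begin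

lemma AE_limit_ge:
  assumes "AE \<omega> in unif_conf_measure. (\<lambda>n. X n \<omega> / n) \<longlonglongrightarrow> c"
    and "\<And>n \<phi>. real n - a \<le> b * X n \<phi>" "b > 0"
  shows "1 / b \<le> c"
proof -
  have "\<exists>\<omega>. (\<lambda>n. X n \<omega> / n) \<longlonglongrightarrow> c"
  proof (rule ccontr)
    assume "\<nexists>\<omega>. (\<lambda>n. X n \<omega> / n) \<longlonglongrightarrow> c"
    then have "AE \<omega> in (unif_conf_measure :: (int \<Rightarrow> 'f) measure). False"
      using assms(1) by simp
    then show False using prob_space.AE_False[OF prob_space_unif_conf] by blast
  qed
  then obtain \<omega> where "(\<lambda>n. X n \<omega> / n) \<longlonglongrightarrow> c" ..
  then show ?thesis using assms(2,3) by (rule LIMSEQ_quotient_ge)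
qed

end

context wr_marked_tours
begin

lemma open_tour_functional:
  "subadditive_conf_functional (\<lambda>n \<phi>. real (open_tour n \<phi>))
    (real (lamp_cost + 3 * move_cost + 2 * move_cost * nat R))"
proof
  show "real (open_tour n (restr_conf \<phi> n)) = real (open_tour n \<phi>)" for n \<phi>
    by simp
  show "real (open_tour n (\<phi>(z := e)))
      \<le> real (open_tour n \<phi>) + real (lamp_cost + 3 * move_cost + 2 * move_cost * nat R)"
    if "z \<in> {1..int n}" for n \<phi> z e
    using open_tour_set_lamp_le[OF that, of \<phi> e] by (simp only: of_nat_add[symmetric] of_nat_le_iff)
  show "real (open_tour (Suc n) \<phi>)
      \<le> real (open_tour n \<phi>) + real (lamp_cost + 3 * move_cost + 2 * move_cost * nat R)" for n \<phi>
    using open_tour_Suc_le[where n = n and \<phi> = \<phi>]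
    by (simp only: of_nat_add[symmetric] of_nat_le_iff)
  show "real (open_tour n \<phi>)
      \<le> real (open_tour (Suc n) \<phi>) + real (lamp_cost + 3 * move_cost + 2 * move_cost * nat R)" for n \<phi>
    using open_tour_le_Suc[where n = n and \<phi> = \<phi>]
    by (simp only: of_nat_add[symmetric] of_nat_le_iff)
  show "real (open_tour (m + n) \<phi>) \<le> real (open_tour m \<phi>) + real (open_tour n (conf_shift (int m) \<phi>))
      + real (lamp_cost + 3 * move_cost + 2 * move_cost * nat R)" for m n \<phi>
    using open_tour_add_le[where m = m and n = n and \<phi> = \<phi>]
    by (simp only: of_nat_add[symmetric] of_nat_le_iff)
qed simp

lemma marked_tour_functional:
  "subadditive_conf_functional (\<lambda>n \<phi>. real (marked_tour n \<phi>))
    (real (2 * (lamp_cost + 2 * move_cost * nat (R + 1)) + lamp_cost + 4 * move_cost * nat (2 * R)))"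
proof
  show "real (marked_tour n (restr_conf \<phi> n)) = real (marked_tour n \<phi>)" for n \<phi>
    by simp
  show "real (marked_tour n (\<phi>(z := e))) \<le> real (marked_tour n \<phi>)
      + real (2 * (lamp_cost + 2 * move_cost * nat (R + 1)) + lamp_cost + 4 * move_cost * nat (2 * R))"
    if "z \<in> {1..int n}" for n \<phi> z e
    using marked_tour_set_lamp_le[OF that, of \<phi> e]
    by (simp only: of_nat_add[symmetric] of_nat_le_iff)
  show "real (marked_tour (Suc n) \<phi>) \<le> real (marked_tour n \<phi>)
      + real (2 * (lamp_cost + 2 * move_cost * nat (R + 1)) + lamp_cost + 4 * move_cost * nat (2 * R))"
    for n \<phi>
    using marked_tour_Suc_le[where n = n and \<phi> = \<phi>]
    by (simp only: of_nat_add[symmetric] of_nat_le_iff)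
  show "real (marked_tour n \<phi>) \<le> real (marked_tour (Suc n) \<phi>)
      + real (2 * (lamp_cost + 2 * move_cost * nat (R + 1)) + lamp_cost + 4 * move_cost * nat (2 * R))"
    for n \<phi>
    using marked_tour_le_Suc[where n = n and \<phi> = \<phi>]
    by (simp only: of_nat_add[symmetric] of_nat_le_iff)
  show "real (marked_tour (m + n) \<phi>)
      \<le> real (marked_tour m \<phi>) + real (marked_tour n (conf_shift (int m) \<phi>))
        + real (2 * (lamp_cost + 2 * move_cost * nat (R + 1)) + lamp_cost + 4 * move_cost * nat (2 * R))"
    for m n \<phi>
    using marked_tour_add_le[where m = m and n = n and \<phi> = \<phi>]
    by (simp only: of_nat_add[symmetric] of_nat_le_iff)
qed simp

lemma open_tour_limit:
  "\<exists>c > 0. AE \<omega> in unif_conf_measure. (\<lambda>n. real (open_tour n \<omega>) / n) \<longlonglongrightarrow> c"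
proof -
  interpret subadditive_conf_functional "\<lambda>n \<phi>. real (open_tour n \<phi>)"
    "real (lamp_cost + 3 * move_cost + 2 * move_cost * nat R)"
    by (rule open_tour_functional)
  obtain c where c: "AE \<omega> in unif_conf_measure. (\<lambda>n. real (open_tour n \<omega>) / n) \<longlonglongrightarrow> c"
    using AE_limit by blast
  have "real_of_int (int n - 1) \<le> real_of_int (R * int (open_tour n \<phi>))" for n \<phi>
    using open_tour_lower_bound by (simp only: of_int_le_iff)
  then have "1 / real_of_int R \<le> c"
    using R_pos by (intro AE_limit_ge[OF c, of 1]) simp_all
  moreover have "0 < 1 / real_of_int R" using R_pos by simp
  ultimately have "0 < c" by linarith
  then show ?thesis using c by blast
qed

lemma marked_tour_limit:
  "\<exists>c > 0. AE \<omega> in unif_conf_measure. (\<lambda>n. real (marked_tour n \<omega>) / n) \<longlonglongrightarrow> c"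
proof -
  interpret subadditive_conf_functional "\<lambda>n \<phi>. real (marked_tour n \<phi>)"
    "real (2 * (lamp_cost + 2 * move_cost * nat (R + 1)) + lamp_cost + 4 * move_cost * nat (2 * R))"
    by (rule marked_tour_functional)
  obtain c where c: "AE \<omega> in unif_conf_measure. (\<lambda>n. real (marked_tour n \<omega>) / n) \<longlonglongrightarrow> c"
    using AE_limit by blast
  have "real_of_int (int n - R) \<le> real_of_int (R * int (marked_tour n \<phi>))" for n \<phi>
    using marked_tour_lower_bound by (simp only: of_int_le_iff)
  then have "1 / real_of_int R \<le> c"
    using R_pos by (intro AE_limit_ge[OF c, of "real_of_int R"]) simp_all
  moreover have "0 < 1 / real_of_int R" using R_pos by simp
  ultimately have "0 < c" by linarith
  then show ?thesis using c by blast
qed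

lemma closed_tour_marked_tour_diff:
  "\<bar>real (closed_tour n \<phi>) - real (marked_tour n \<phi>)\<bar>
    \<le> real (lamp_cost + 2 * move_cost * nat (R + 1)) + real lamp_cost + 2 * real move_cost * (1 + real_of_int R)
      + 2 * real move_cost * real_of_int (int n - last_lamp n \<phi>)"
proof -
  define d g r where "d = real move_cost" and "g = real_of_int (int n - last_lamp n \<phi>)"
    and "r = real_of_int R"
  have "0 \<le> g" using last_lamp_le[of n \<phi>] by (simp add: g_def)
  then have gap: "real (nat (int n - last_lamp n \<phi> + 1 + R)) = g + 1 + r"
    using R_nonneg by (simp add: g_def r_def)
  have "real (marked_tour n \<phi>) \<le> real (closed_tour n \<phi>) + real lamp_cost + 2 * d * (g + 1 + r)"
    using of_nat_mono[OF marked_tour_le_closed_tour[where n = n and \<phi> = \<phi>], where 'a = real]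
    unfolding of_nat_add of_nat_mult gap by (simp add: d_def)
  moreover have "real (closed_tour n \<phi>) \<le> real (marked_tour n \<phi>) + real (lamp_cost + 2 * move_cost * nat (R + 1))"
    using of_nat_mono[OF closed_tour_le_marked_tour[where n = n and \<phi> = \<phi>], where 'a = real]
    unfolding of_nat_add by simp
  moreover have "2 * d * (g + 1 + r) = 2 * d * (1 + r) + 2 * d * g"
    by (simp add: algebra_simps)
  moreover have "0 \<le> 2 * d * g" "0 \<le> 2 * d * (1 + r)"
    using \<open>0 \<le> g\<close> R_nonneg by (simp_all add: d_def r_def)
  ultimately show ?thesis
    unfolding abs_le_iff d_def[symmetric] g_def[symmetric] r_def[symmetric] by (intro conjI; linarith)
qed

lemma closed_tour_limit:
  assumes "CARD('f) \<ge> 2"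
    and marked: "AE \<omega> in unif_conf_measure. (\<lambda>n. real (marked_tour n \<omega>) / n) \<longlonglongrightarrow> c"
  shows "AE \<omega> in unif_conf_measure. (\<lambda>n. real (closed_tour n \<omega>) / n) \<longlonglongrightarrow> c"
  using AE_conjI[OF marked AE_last_lamp_gap[OF assms(1)]]
proof (rule eventually_mono, elim conjE)
  fix \<omega> :: "int \<Rightarrow> 'f"
  assume U: "(\<lambda>n. real (marked_tour n \<omega>) / n) \<longlonglongrightarrow> c"
    and gap: "(\<lambda>n. real_of_int (int n - last_lamp n \<omega>) / n) \<longlonglongrightarrow> 0"
  define K where "K = real (lamp_cost + 2 * move_cost * nat (R + 1)) + real lamp_cost
    + 2 * real move_cost * (1 + real_of_int R)"
  have "(\<lambda>n. K / n + 2 * real move_cost * (real_of_int (int n - last_lamp n \<omega>) / n))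
      \<longlonglongrightarrow> 0 + 2 * real move_cost * 0"
    by (intro tendsto_add lim_const_over_n tendsto_mult tendsto_const gap)
  then have bound_tendsto:
    "(\<lambda>n. K / n + 2 * real move_cost * (real_of_int (int n - last_lamp n \<omega>) / n)) \<longlonglongrightarrow> 0"
    by simp
  have bound: "norm ((real (closed_tour n \<omega>) - real (marked_tour n \<omega>)) / n)
      \<le> K / n + 2 * real move_cost * (real_of_int (int n - last_lamp n \<omega>) / n)" for n
  proof -
    have "\<bar>real (closed_tour n \<omega>) - real (marked_tour n \<omega>)\<bar> / n
        \<le> (K + 2 * real move_cost * real_of_int (int n - last_lamp n \<omega>)) / n"
      using closed_tour_marked_tour_diff[where n = n and \<phi> = \<omega>] by (simp add: K_def divide_right_mono)
    then show ?thesis by (simp add: abs_divide add_divide_distrib)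
  qed
  have "(\<lambda>n. (real (closed_tour n \<omega>) - real (marked_tour n \<omega>)) / n) \<longlonglongrightarrow> 0"
    by (rule Lim_null_comparison[OF always_eventually bound_tendsto]) (intro allI bound)
  then have "(\<lambda>n. (real (closed_tour n \<omega>) - real (marked_tour n \<omega>)) / n + real (marked_tour n \<omega>) / n)
      \<longlonglongrightarrow> 0 + c"
    by (intro tendsto_intros U)
  then show "(\<lambda>n. real (closed_tour n \<omega>) / n) \<longlonglongrightarrow> c"
    by (simp add: diff_divide_distrib)
qed

end

theorem lemma6p3:
  fixes S :: "(int \<times> (int \<Rightarrow> 'f::{finite,group_add})) set"
  assumes "CARD('f) \<ge> 2"
    and "wr_symmetric_generating_set S"
  shows "\<exists>c1 c2 :: real. c1 > 0 \<and> c2 > 0 \<and>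
    (AE \<omega> in unif_conf_measure.
       (\<lambda>n. real (TSP S (restr_conf \<omega> n) 1 1) / real n) \<longlonglongrightarrow> c1) \<and>
    (AE \<omega> in unif_conf_measure.
       (\<lambda>n. real (TSP S (restr_conf \<omega> n) 1 (int n)) / real n) \<longlonglongrightarrow> c2)"
proof -
  have "(UNIV :: 'f set) \<noteq> {0}"
  proof
    assume "(UNIV :: 'f set) = {0}"
    then have "CARD('f) = 1" by (metis One_nat_def card_1_singleton_iff)
    with assms(1) show False by simp
  qed
  then obtain a :: 'f where "a \<noteq> 0" by blast
  then interpret wr_marked_tours S a
    using assms(2) by unfold_locales
  obtain c1 where "c1 > 0" "AE \<omega> in unif_conf_measure. (\<lambda>n. real (marked_tour n \<omega>) / n) \<longlonglongrightarrow> c1"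
    using marked_tour_limit by blast
  moreover obtain c2 where "c2 > 0"
    "AE \<omega> in unif_conf_measure. (\<lambda>n. real (open_tour n \<omega>) / n) \<longlonglongrightarrow> c2"
    using open_tour_limit by blast
  ultimately show ?thesis
    using closed_tour_limit[OF assms(1)] by blast
qed

end
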